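(* Let $G$ be a finite simple graph and $L_G$ its holonomy Lie algebra. Let $v$ be a vertex of $G$, let $V$ be the set of edges of $G$ incident to $v$, let $K$ be the set of edges of $G$ both of whose endpoints are neighbours of $v$, and let $G_2$ be the graph with edge set $E(G)\setminus V$. Let $\pi:L_G\to L_{G_2}$ be the (well-defined) Lie homomorphism sending each edge in $V$ to $0$ and each other edge to itself. If $K$ is complete (i.e. any two distinct neighbours of $v$ are joined by an edge of $G$), then $\ker\pi$ is a free Lie algebra freely generated by the (images of the) edges in $V$.
   Context: All Lie algebras are over a fixed field. A triangle in a graph is a set of three edges forming a cycle of length 3. For a finite simple graph $G$ with edge set $E(G)$, the holonomy Lie algebra $L_G$ is the free Lie algebra on $E(G)$ modulo the relations $[x,y]=0$ for every pair of distinct edges $x,y$ not contained in a common triangle, and $[a,b]=[b,c]=[c,a]$ for every triangle $\{a,b,c\}$. $L_{G_2}$ is defined in the same way for the graph $G_2$. *)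

theory Defs
  imports Main
begin

datatype ('a, 'k) lterm =
    Gen 'a
  | LZero
  | LAdd "('a, 'k) lterm" "('a, 'k) lterm"
  | LSmul 'k "('a, 'k) lterm"
  | LBr "('a, 'k) lterm" "('a, 'k) lterm"

primrec gens :: "('a, 'k) lterm \<Rightarrow> 'a set" where
  "gens (Gen a) = {a}"
| "gens LZero = {}"
| "gens (LAdd s t) = gens s \<union> gens t"
| "gens (LSmul c t) = gens t"
| "gens (LBr s t) = gens s \<union> gens t"

definition lwf :: "'a set \<Rightarrow> ('a, 'k) lterm \<Rightarrow> bool" where
  "lwf X t \<longleftrightarrow> gens t \<subseteq> X"

text \<open>\<open>lie_eq X R s t\<close>: s and t are equal in the Lie algebra over the field 'k
  presented by generators X and relations R (pairs identified), i.e. the free Lie algebra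
  on X modulo the ideal generated by the relations.\<close>
inductive lie_eq :: "'a set \<Rightarrow> (('a, 'k::field) lterm \<times> ('a, 'k) lterm) set
    \<Rightarrow> ('a, 'k) lterm \<Rightarrow> ('a, 'k) lterm \<Rightarrow> bool"
  for X R where
  rel: "(s, t) \<in> R \<Longrightarrow> lwf X s \<Longrightarrow> lwf X t \<Longrightarrow> lie_eq X R s t"
| refl: "lwf X s \<Longrightarrow> lie_eq X R s s"
| sym: "lie_eq X R s t \<Longrightarrow> lie_eq X R t s"
| trans: "lie_eq X R s t \<Longrightarrow> lie_eq X R t u \<Longrightarrow> lie_eq X R s u"
| cong_add: "lie_eq X R s s' \<Longrightarrow> lie_eq X R t t' \<Longrightarrow> lie_eq X R (LAdd s t) (LAdd s' t')"
| cong_smul: "lie_eq X R s s' \<Longrightarrow> lie_eq X R (LSmul c s) (LSmul c s')"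
| cong_br: "lie_eq X R s s' \<Longrightarrow> lie_eq X R t t' \<Longrightarrow> lie_eq X R (LBr s t) (LBr s' t')"
| add_assoc: "lwf X x \<Longrightarrow> lwf X y \<Longrightarrow> lwf X z \<Longrightarrow>
     lie_eq X R (LAdd (LAdd x y) z) (LAdd x (LAdd y z))"
| add_comm: "lwf X x \<Longrightarrow> lwf X y \<Longrightarrow> lie_eq X R (LAdd x y) (LAdd y x)"
| add_zero: "lwf X x \<Longrightarrow> lie_eq X R (LAdd x LZero) x"
| add_inv: "lwf X x \<Longrightarrow> lie_eq X R (LAdd x (LSmul (-1) x)) LZero"
| smul_one: "lwf X x \<Longrightarrow> lie_eq X R (LSmul 1 x) x"
| smul_assoc: "lwf X x \<Longrightarrow> lie_eq X R (LSmul a (LSmul b x)) (LSmul (a * b) x)"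
| smul_add: "lwf X x \<Longrightarrow> lwf X y \<Longrightarrow>
     lie_eq X R (LSmul a (LAdd x y)) (LAdd (LSmul a x) (LSmul a y))"
| add_smul: "lwf X x \<Longrightarrow> lie_eq X R (LSmul (a + b) x) (LAdd (LSmul a x) (LSmul b x))"
| br_add_left: "lwf X x \<Longrightarrow> lwf X y \<Longrightarrow> lwf X z \<Longrightarrow>
     lie_eq X R (LBr (LAdd x y) z) (LAdd (LBr x z) (LBr y z))"
| br_add_right: "lwf X x \<Longrightarrow> lwf X y \<Longrightarrow> lwf X z \<Longrightarrow>
     lie_eq X R (LBr x (LAdd y z)) (LAdd (LBr x y) (LBr x z))"
| br_smul_left: "lwf X x \<Longrightarrow> lwf X y \<Longrightarrow>
     lie_eq X R (LBr (LSmul a x) y) (LSmul a (LBr x y))"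
| br_smul_right: "lwf X x \<Longrightarrow> lwf X y \<Longrightarrow>
     lie_eq X R (LBr x (LSmul a y)) (LSmul a (LBr x y))"
| br_alt: "lwf X x \<Longrightarrow> lie_eq X R (LBr x x) LZero"
| jacobi: "lwf X x \<Longrightarrow> lwf X y \<Longrightarrow> lwf X z \<Longrightarrow>
     lie_eq X R (LAdd (LBr x (LBr y z)) (LAdd (LBr y (LBr z x)) (LBr z (LBr x y)))) LZero"

definition simple_graph :: "'v set \<Rightarrow> 'v set set \<Rightarrow> bool" where
  "simple_graph Vs E \<longleftrightarrow> finite Vs \<and>
     (\<forall>e\<in>E. \<exists>a b. a \<in> Vs \<and> b \<in> Vs \<and> a \<noteq> b \<and> e = {a, b})"

definition triangle :: "'v set set \<Rightarrow> 'v set set \<Rightarrow> bool" where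
  "triangle E T \<longleftrightarrow> T \<subseteq> E \<and>
     (\<exists>x y z. x \<noteq> y \<and> y \<noteq> z \<and> x \<noteq> z \<and> T = {{x, y}, {y, z}, {x, z}})"

definition holo_rels :: "'v set set \<Rightarrow> (('v set, 'k) lterm \<times> ('v set, 'k) lterm) set" where
  "holo_rels E =
     {(LBr (Gen x) (Gen y), LZero) | x y. x \<in> E \<and> y \<in> E \<and> x \<noteq> y \<and>
         \<not> (\<exists>T. triangle E T \<and> x \<in> T \<and> y \<in> T)}
   \<union> {(LBr (Gen a) (Gen b), LBr (Gen b) (Gen c)) | a b c.
         a \<noteq> b \<and> b \<noteq> c \<and> a \<noteq> c \<and> triangle E {a, b, c}}
   \<union> {(LBr (Gen b) (Gen c), LBr (Gen c) (Gen a)) | a b c.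
         a \<noteq> b \<and> b \<noteq> c \<and> a \<noteq> c \<and> triangle E {a, b, c}}"

text \<open>Equality in the holonomy Lie algebra L_G of the graph with edge set E
  (elements of L_G are represented by expressions t with lwf E t).\<close>
abbreviation holo_eq :: "'v set set \<Rightarrow> ('v set, 'k::field) lterm \<Rightarrow> ('v set, 'k) lterm \<Rightarrow> bool" where
  "holo_eq E \<equiv> lie_eq E (holo_rels E)"

text \<open>The substitution sending the generators in V to 0 and fixing the other generators;
  on representatives this is the homomorphism \<pi>.\<close>
primrec kill :: "'a set \<Rightarrow> ('a, 'k) lterm \<Rightarrow> ('a, 'k) lterm" where
  "kill V (Gen a) = (if a \<in> V then LZero else Gen a)"
| "kill V LZero = LZero"
| "kill V (LAdd s t) = LAdd (kill V s) (kill V t)"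
| "kill V (LSmul c t) = LSmul c (kill V t)"
| "kill V (LBr s t) = LBr (kill V s) (kill V t)"

end

theory Submission
  imports Defs
begin

(* The span of the star V of v is an ideal of L_G: modulo the relations, an edge y = {s,t} off v
   brackets a star edge {v,s} either to 0 or, through the triangle {v,s,t}, to [{v,s},{v,t}].
   So t - \<pi>(t) lies in that span for every t, and ker \<pi> is generated by V.
   For freeness, let F be the free Lie algebra on V and map L_G to Der(F) \<ltimes> F, sending a star
   edge e to (0, e) and an edge y = {s,t} off v to (D_y, 0), where the derivation D_y sends {v,s}
   to [{v,s},{v,t}] when {v,t} is an edge and kills the other generators. Because the link of v
   is complete, these data satisfy the holonomy relations. The F-component of the image of a Lie
   word in V is the word itself, so distinct elements of F stay distinct in L_G. *)

section \<open>Equational reasoning in presented Lie algebras\<close>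

declare lie_eq.trans[trans]

abbreviation lsub :: "('a, 'k::field) lterm \<Rightarrow> ('a, 'k) lterm \<Rightarrow> ('a, 'k) lterm" where
  "lsub a b \<equiv> LAdd a (LSmul (-1) b)"

lemma lwf_simps [simp]:
  "lwf X (Gen a) \<longleftrightarrow> a \<in> X"
  "lwf X LZero"
  "lwf X (LAdd s t) \<longleftrightarrow> lwf X s \<and> lwf X t"
  "lwf X (LSmul c t) \<longleftrightarrow> lwf X t"
  "lwf X (LBr s t) \<longleftrightarrow> lwf X s \<and> lwf X t"
  by (auto simp: lwf_def)

lemma lwf_mono: "lwf X t \<Longrightarrow> X \<subseteq> X' \<Longrightarrow> lwf X' t"
  unfolding lwf_def by blast

lemma lie_eq_lwf: "lie_eq X R s t \<Longrightarrow> lwf X s \<and> lwf X t"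
  by (induction rule: lie_eq.induct) auto

lemma lie_eq_lwfD1: "lie_eq X R s t \<Longrightarrow> lwf X s"
  and lie_eq_lwfD2: "lie_eq X R s t \<Longrightarrow> lwf X t"
  using lie_eq_lwf by blast+

lemma lie_eq_mono:
  assumes "lie_eq X R s t" "X \<subseteq> X'" "R \<subseteq> R'"
  shows "lie_eq X' R' s t"
  using assms(1)
proof (induction rule: lie_eq.induct)
  case (rel s t)
  then show ?case using assms(2,3) by (intro lie_eq.rel) (auto intro: lwf_mono)
next
  case (sym s t)
  show ?case using sym.IH by (rule lie_eq.sym)
next
  case (trans s t u)
  show ?case using trans.IH by (rule lie_eq.trans)
next
  case (cong_add s s' t t')
  show ?case using cong_add.IH by (rule lie_eq.cong_add)
next
  case (cong_smul s s' c)
  show ?case using cong_smul.IH by (rule lie_eq.cong_smul)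
next
  case (cong_br s s' t t')
  show ?case using cong_br.IH by (rule lie_eq.cong_br)
qed (use assms(2) lwf_mono in \<open>blast intro: lie_eq.refl lie_eq.add_assoc lie_eq.add_comm
  lie_eq.add_zero lie_eq.add_inv lie_eq.smul_one lie_eq.smul_assoc lie_eq.smul_add lie_eq.add_smul
  lie_eq.br_add_left lie_eq.br_add_right lie_eq.br_smul_left lie_eq.br_smul_right lie_eq.br_alt
  lie_eq.jacobi\<close>)+

lemmas lie_eq_cong_intros = lie_eq.cong_add lie_eq.cong_smul lie_eq.cong_br lie_eq.refl

lemma lie_eq_zero_if_double:
  assumes "lie_eq X R a (LAdd a a)"
  shows "lie_eq X R a LZero"
proof -
  have a: "lwf X a" using assms by (rule lie_eq_lwfD1)
  have "lie_eq X R LZero (lsub a a)" using a by (intro lie_eq.sym[OF lie_eq.add_inv])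
  also have "lie_eq X R \<dots> (lsub (LAdd a a) a)"
    using assms a by (intro lie_eq_cong_intros) auto
  also have "lie_eq X R \<dots> (LAdd a (lsub a a))"
    using a by (intro lie_eq.add_assoc) auto
  also have "lie_eq X R \<dots> (LAdd a LZero)"
    using a by (intro lie_eq_cong_intros lie_eq.add_inv)
  also have "lie_eq X R \<dots> a" using a by (rule lie_eq.add_zero)
  finally show ?thesis by (rule lie_eq.sym)
qed

lemma lie_eq_add_zero_left: "lwf X a \<Longrightarrow> lie_eq X R (LAdd LZero a) a"
  by (meson lie_eq.add_comm lie_eq.add_zero lie_eq.trans lwf_simps(2))

lemma lie_eq_smul_zero: "lie_eq X R (LSmul c LZero) LZero"
proof (rule lie_eq_zero_if_double)
  have "lie_eq X R (LSmul c LZero) (LSmul c (LAdd LZero LZero))"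
    by (intro lie_eq_cong_intros lie_eq.sym[OF lie_eq.add_zero]) auto
  also have "lie_eq X R \<dots> (LAdd (LSmul c LZero) (LSmul c LZero))"
    by (rule lie_eq.smul_add) auto
  finally show "lie_eq X R (LSmul c LZero) (LAdd (LSmul c LZero) (LSmul c LZero))" .
qed

lemma lie_eq_zero_smul:
  assumes "lwf X a"
  shows "lie_eq X R (LSmul 0 a) LZero"
proof (rule lie_eq_zero_if_double)
  have "lie_eq X R (LSmul 0 a) (LSmul (0 + 0) a)" using assms by (simp add: lie_eq.refl)
  also have "lie_eq X R \<dots> (LAdd (LSmul 0 a) (LSmul 0 a))"
    using assms by (rule lie_eq.add_smul)
  finally show "lie_eq X R (LSmul 0 a) (LAdd (LSmul 0 a) (LSmul 0 a))" .
qed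

lemma lie_eq_br_zero_left:
  assumes "lwf X a"
  shows "lie_eq X R (LBr LZero a) LZero"
proof (rule lie_eq_zero_if_double)
  have "lie_eq X R (LBr LZero a) (LBr (LAdd LZero LZero) a)"
    using assms by (intro lie_eq_cong_intros lie_eq.sym[OF lie_eq.add_zero]) auto
  also have "lie_eq X R \<dots> (LAdd (LBr LZero a) (LBr LZero a))"
    using assms by (intro lie_eq.br_add_left) auto
  finally show "lie_eq X R (LBr LZero a) (LAdd (LBr LZero a) (LBr LZero a))" .
qed

lemma lie_eq_br_zero_right:
  assumes "lwf X a"
  shows "lie_eq X R (LBr a LZero) LZero"
proof (rule lie_eq_zero_if_double)
  have "lie_eq X R (LBr a LZero) (LBr a (LAdd LZero LZero))"
    using assms by (intro lie_eq_cong_intros lie_eq.sym[OF lie_eq.add_zero]) auto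
  also have "lie_eq X R \<dots> (LAdd (LBr a LZero) (LBr a LZero))"
    using assms by (intro lie_eq.br_add_right) auto
  finally show "lie_eq X R (LBr a LZero) (LAdd (LBr a LZero) (LBr a LZero))" .
qed

lemma lie_eq_add_left_commute:
  assumes "lwf X a" "lwf X b" "lwf X c"
  shows "lie_eq X R (LAdd a (LAdd b c)) (LAdd b (LAdd a c))"
proof -
  have "lie_eq X R (LAdd a (LAdd b c)) (LAdd (LAdd a b) c)"
    using assms by (intro lie_eq.sym[OF lie_eq.add_assoc])
  also have "lie_eq X R \<dots> (LAdd (LAdd b a) c)"
    using assms by (intro lie_eq_cong_intros lie_eq.add_comm)
  also have "lie_eq X R \<dots> (LAdd b (LAdd a c))"
    using assms by (intro lie_eq.add_assoc)
  finally show ?thesis .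
qed

lemma lie_eq_add_smul_left:
  assumes "lwf X a" "lwf X b"
  shows "lie_eq X R (LAdd (LSmul c a) (LAdd (LSmul d a) b)) (LAdd (LSmul (c + d) a) b)"
proof -
  have "lie_eq X R (LAdd (LSmul c a) (LAdd (LSmul d a) b)) (LAdd (LAdd (LSmul c a) (LSmul d a)) b)"
    using assms by (intro lie_eq.sym[OF lie_eq.add_assoc]) auto
  also have "lie_eq X R \<dots> (LAdd (LSmul (c + d) a) b)"
    using assms by (intro lie_eq_cong_intros lie_eq.sym[OF lie_eq.add_smul])
  finally show ?thesis .
qed

lemma lie_eq_br_smul_smul:
  assumes "lwf X a" "lwf X b"
  shows "lie_eq X R (LBr (LSmul c a) (LSmul d b)) (LSmul (c * d) (LBr a b))"
proof -
  have "lie_eq X R (LBr (LSmul c a) (LSmul d b)) (LSmul c (LBr a (LSmul d b)))"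
    using assms by (intro lie_eq.br_smul_left) auto
  also have "lie_eq X R \<dots> (LSmul c (LSmul d (LBr a b)))"
    using assms by (intro lie_eq_cong_intros lie_eq.br_smul_right)
  also have "lie_eq X R \<dots> (LSmul (c * d) (LBr a b))"
    using assms by (intro lie_eq.smul_assoc) auto
  finally show ?thesis .
qed

subsection \<open>Multilinear normal form\<close>

datatype 'a monomial = MVar 'a | MBr "'a monomial" "'a monomial"

primrec mono_term :: "'a monomial \<Rightarrow> ('a, 'k) lterm" where
  "mono_term (MVar a) = Gen a"
| "mono_term (MBr p q) = LBr (mono_term p) (mono_term q)"

primrec mono_vars :: "'a monomial \<Rightarrow> 'a set" where
  "mono_vars (MVar a) = {a}"
| "mono_vars (MBr p q) = mono_vars p \<union> mono_vars q"

lemma lwf_mono_term [simp]: "lwf X (mono_term p) \<longleftrightarrow> mono_vars p \<subseteq> X"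
  by (induction p) auto

text \<open>Coefficients of the expansion of a term by bilinearity, i.e. in the free nonassociative
  algebra: antisymmetry and the Jacobi identity are not applied.\<close>
primrec lcoeff :: "('a, 'k::field) lterm \<Rightarrow> 'a monomial \<Rightarrow> 'k" where
  "lcoeff (Gen a) = (\<lambda>p. if p = MVar a then 1 else 0)"
| "lcoeff LZero = (\<lambda>p. 0)"
| "lcoeff (LAdd s t) = (\<lambda>p. lcoeff s p + lcoeff t p)"
| "lcoeff (LSmul c t) = (\<lambda>p. c * lcoeff t p)"
| "lcoeff (LBr s t) = (\<lambda>p. case p of MVar a \<Rightarrow> 0 | MBr p1 p2 \<Rightarrow> lcoeff s p1 * lcoeff t p2)"

fun lcomb :: "('a monomial \<times> 'k) list \<Rightarrow> ('a, 'k) lterm" where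
  "lcomb [] = LZero"
| "lcomb ((p, c) # xs) = LAdd (LSmul c (mono_term p)) (lcomb xs)"

fun lcomb_vars :: "('a monomial \<times> 'k) list \<Rightarrow> 'a set" where
  "lcomb_vars [] = {}"
| "lcomb_vars ((p, c) # xs) = mono_vars p \<union> lcomb_vars xs"

fun lcomb_coeff :: "('a monomial \<times> 'k::field) list \<Rightarrow> 'a monomial \<Rightarrow> 'k" where
  "lcomb_coeff [] p = 0"
| "lcomb_coeff ((q, d) # xs) p = (if q = p then d else 0) + lcomb_coeff xs p"

definition lcomb_scale :: "'k::times \<Rightarrow> ('a monomial \<times> 'k) list \<Rightarrow> ('a monomial \<times> 'k) list" where
  "lcomb_scale c xs = map (\<lambda>(p, d). (p, c * d)) xs"

fun lcomb_br ::
    "('a monomial \<times> 'k::times) list \<Rightarrow> ('a monomial \<times> 'k) list \<Rightarrow> ('a monomial \<times> 'k) list"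
  where
  "lcomb_br [] ys = []"
| "lcomb_br ((p, c) # xs) ys = map (\<lambda>(q, d). (MBr p q, c * d)) ys @ lcomb_br xs ys"

primrec expand :: "('a, 'k::field) lterm \<Rightarrow> ('a monomial \<times> 'k) list" where
  "expand (Gen a) = [(MVar a, 1)]"
| "expand LZero = []"
| "expand (LAdd s t) = expand s @ expand t"
| "expand (LSmul c t) = lcomb_scale c (expand t)"
| "expand (LBr s t) = lcomb_br (expand s) (expand t)"

lemma lcomb_vars_append [simp]: "lcomb_vars (xs @ ys) = lcomb_vars xs \<union> lcomb_vars ys"
  by (induction xs rule: lcomb_vars.induct) auto

lemma lcomb_vars_scale [simp]: "lcomb_vars (lcomb_scale c xs) = lcomb_vars xs"
  by (induction xs rule: lcomb_vars.induct) (auto simp: lcomb_scale_def)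

lemma lcomb_vars_br: "lcomb_vars (lcomb_br xs ys) \<subseteq> lcomb_vars xs \<union> lcomb_vars ys"
proof (induction xs ys rule: lcomb_br.induct)
  case (2 p c xs ys)
  have "lcomb_vars (map (\<lambda>(q, d). (MBr p q, c * d)) ys) = mono_vars p \<union> lcomb_vars ys \<or> ys = []"
    by (induction ys rule: lcomb_vars.induct) auto
  then show ?case using 2 by auto
qed simp

lemma lwf_lcomb [simp]: "lwf X (lcomb xs) \<longleftrightarrow> lcomb_vars xs \<subseteq> X"
  by (induction xs rule: lcomb.induct) auto

lemma lcomb_vars_expand: "lcomb_vars (expand t) \<subseteq> gens t"
  by (induction t) (auto dest: subsetD[OF lcomb_vars_br])

lemma lcomb_vars_filter: "lcomb_vars (filter P xs) \<subseteq> lcomb_vars xs"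
  by (induction xs rule: lcomb_vars.induct) auto

lemma lcomb_coeff_append [simp]: "lcomb_coeff (xs @ ys) p = lcomb_coeff xs p + lcomb_coeff ys p"
  by (induction xs) auto

lemma lcomb_coeff_scale [simp]: "lcomb_coeff (lcomb_scale c xs) p = c * lcomb_coeff xs p"
  by (induction xs) (auto simp: lcomb_scale_def algebra_simps)

lemma lcomb_coeff_br:
  "lcomb_coeff (lcomb_br xs ys) r =
     (case r of MVar _ \<Rightarrow> 0 | MBr p q \<Rightarrow> lcomb_coeff xs p * lcomb_coeff ys q)"
proof (induction xs ys rule: lcomb_br.induct)
  case (2 p c xs ys)
  have "lcomb_coeff (map (\<lambda>(q, d). (MBr p q, c * d)) ys) r =
     (case r of MVar _ \<Rightarrow> 0 | MBr p' q \<Rightarrow> if p' = p then c * lcomb_coeff ys q else 0)"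
    by (induction ys) (auto split: monomial.split simp: algebra_simps)
  then show ?case using 2 by (auto split: monomial.split simp: algebra_simps)
qed (simp split: monomial.split)

lemma lcomb_coeff_expand: "lcomb_coeff (expand t) = lcoeff t"
  by (induction t) (auto simp: lcomb_coeff_br fun_eq_iff split: monomial.split)

lemma lie_eq_lcomb_append:
  "lcomb_vars xs \<subseteq> X \<Longrightarrow> lcomb_vars ys \<subseteq> X \<Longrightarrow>
     lie_eq X R (lcomb (xs @ ys)) (LAdd (lcomb xs) (lcomb ys))"
proof (induction xs rule: lcomb.induct)
  case 1
  then show ?case by (simp add: lie_eq.sym[OF lie_eq_add_zero_left])
next
  case (2 p c xs)
  have "lie_eq X R (lcomb (((p, c) # xs) @ ys))
      (LAdd (LSmul c (mono_term p)) (LAdd (lcomb xs) (lcomb ys)))"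
    using 2 by (simp, intro lie_eq_cong_intros 2(1)) auto
  also have "lie_eq X R \<dots> (LAdd (lcomb ((p, c) # xs)) (lcomb ys))"
    using 2 by (simp, intro lie_eq.sym[OF lie_eq.add_assoc]) auto
  finally show ?case .
qed

lemma lie_eq_lcomb_scale:
  "lcomb_vars xs \<subseteq> X \<Longrightarrow> lie_eq X R (lcomb (lcomb_scale c xs)) (LSmul c (lcomb xs))"
proof (induction xs rule: lcomb.induct)
  case 1
  then show ?case by (simp add: lcomb_scale_def lie_eq.sym[OF lie_eq_smul_zero])
next
  case (2 p d xs)
  have "lie_eq X R (lcomb (lcomb_scale c ((p, d) # xs)))
      (LAdd (LSmul c (LSmul d (mono_term p))) (LSmul c (lcomb xs)))"
    using 2 by (simp add: lcomb_scale_def,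
        intro lie_eq_cong_intros lie_eq.sym[OF lie_eq.smul_assoc] 2(1)[unfolded lcomb_scale_def]) auto
  also have "lie_eq X R \<dots> (LSmul c (lcomb ((p, d) # xs)))"
    using 2 by (simp, intro lie_eq.sym[OF lie_eq.smul_add]) auto
  finally show ?case .
qed

lemma lie_eq_lcomb_br_monomial:
  "mono_vars p \<subseteq> X \<Longrightarrow> lcomb_vars ys \<subseteq> X \<Longrightarrow>
     lie_eq X R (LBr (LSmul c (mono_term p)) (lcomb ys)) (lcomb (map (\<lambda>(q, d). (MBr p q, c * d)) ys))"
proof (induction ys rule: lcomb.induct)
  case 1
  then show ?case by (simp add: lie_eq_br_zero_right)
next
  case (2 q d ys)
  have "lie_eq X R (LBr (LSmul c (mono_term p)) (lcomb ((q, d) # ys)))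
     (LAdd (LBr (LSmul c (mono_term p)) (LSmul d (mono_term q)))
       (LBr (LSmul c (mono_term p)) (lcomb ys)))"
    using 2 by (simp, intro lie_eq.br_add_right) auto
  also have "lie_eq X R \<dots>
      (LAdd (LSmul (c * d) (mono_term (MBr p q))) (lcomb (map (\<lambda>(q, d). (MBr p q, c * d)) ys)))"
    using 2 by (simp, intro lie_eq_cong_intros lie_eq_br_smul_smul 2(1)) auto
  finally show ?case by simp
qed

lemma lie_eq_lcomb_br:
  "lcomb_vars xs \<subseteq> X \<Longrightarrow> lcomb_vars ys \<subseteq> X \<Longrightarrow>
     lie_eq X R (LBr (lcomb xs) (lcomb ys)) (lcomb (lcomb_br xs ys))"
proof (induction xs ys rule: lcomb_br.induct)
  case (1 ys)
  then show ?case by (simp add: lie_eq_br_zero_left)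
next
  case (2 p c xs ys)
  let ?A = "map (\<lambda>(q, d). (MBr p q, c * d)) ys"
  have vars: "lcomb_vars ?A \<subseteq> X" "lcomb_vars (lcomb_br xs ys) \<subseteq> X"
    using 2(2,3) lcomb_vars_br[of "[(p, c)]" ys] lcomb_vars_br[of xs ys] by auto
  have "lie_eq X R (LBr (lcomb ((p, c) # xs)) (lcomb ys))
     (LAdd (LBr (LSmul c (mono_term p)) (lcomb ys)) (LBr (lcomb xs) (lcomb ys)))"
    using 2 by (simp, intro lie_eq.br_add_left) auto
  also have "lie_eq X R \<dots> (LAdd (lcomb ?A) (lcomb (lcomb_br xs ys)))"
    using 2 by (intro lie_eq_cong_intros lie_eq_lcomb_br_monomial 2(1)) auto
  also have "lie_eq X R \<dots> (lcomb (?A @ lcomb_br xs ys))"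
    by (rule lie_eq.sym[OF lie_eq_lcomb_append[OF vars]])
  finally show ?case by simp
qed

lemma lie_eq_expand: "lwf X t \<Longrightarrow> lie_eq X R t (lcomb (expand t))"
proof (induction t)
  case (Gen a)
  have "lie_eq X R (Gen a) (LSmul 1 (Gen a))"
    using Gen by (intro lie_eq.sym[OF lie_eq.smul_one]) simp
  also have "lie_eq X R \<dots> (LAdd (LSmul 1 (Gen a)) LZero)"
    using Gen by (intro lie_eq.sym[OF lie_eq.add_zero]) simp
  finally show ?case by simp
next
  case LZero
  then show ?case by (simp add: lie_eq.refl)
next
  case (LAdd s t)
  then have "lie_eq X R (LAdd s t) (LAdd (lcomb (expand s)) (lcomb (expand t)))"
    by (intro lie_eq_cong_intros) auto
  also have "lie_eq X R \<dots> (lcomb (expand s @ expand t))"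
    using LAdd.prems lcomb_vars_expand[of s] lcomb_vars_expand[of t]
    by (intro lie_eq.sym[OF lie_eq_lcomb_append]) (auto simp: lwf_def)
  finally show ?case by simp
next
  case (LSmul c t)
  then have "lie_eq X R (LSmul c t) (LSmul c (lcomb (expand t)))"
    by (intro lie_eq_cong_intros) auto
  also have "lie_eq X R \<dots> (lcomb (lcomb_scale c (expand t)))"
    using LSmul.prems lcomb_vars_expand[of t]
    by (intro lie_eq.sym[OF lie_eq_lcomb_scale]) (auto simp: lwf_def)
  finally show ?case by simp
next
  case (LBr s t)
  then have "lie_eq X R (LBr s t) (LBr (lcomb (expand s)) (lcomb (expand t)))"
    by (intro lie_eq_cong_intros) auto
  also have "lie_eq X R \<dots> (lcomb (expand (LBr s t)))"
    using LBr.prems lcomb_vars_expand[of s] lcomb_vars_expand[of t]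
    by (simp, intro lie_eq_lcomb_br) (auto simp: lwf_def)
  finally show ?case .
qed

lemma lie_eq_lcomb_extract:
  "lcomb_vars xs \<subseteq> X \<Longrightarrow> mono_vars p \<subseteq> X \<Longrightarrow>
     lie_eq X R (lcomb xs)
       (LAdd (LSmul (lcomb_coeff xs p) (mono_term p)) (lcomb (filter (\<lambda>(q, _). q \<noteq> p) xs)))"
proof (induction xs rule: lcomb.induct)
  case 1
  have "lie_eq X R LZero (LSmul 0 (mono_term p))"
    using 1 by (intro lie_eq.sym[OF lie_eq_zero_smul]) simp
  also have "lie_eq X R \<dots> (LAdd (LSmul 0 (mono_term p)) LZero)"
    using 1 by (intro lie_eq.sym[OF lie_eq.add_zero]) simp
  finally show ?case by simp
next
  case (2 q d xs)
  let ?rest = "lcomb (filter (\<lambda>(q, _). q \<noteq> p) xs)"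
  have "lie_eq X R (lcomb ((q, d) # xs))
     (LAdd (LSmul d (mono_term q)) (LAdd (LSmul (lcomb_coeff xs p) (mono_term p)) ?rest))"
    using 2 by (simp, intro lie_eq_cong_intros 2(1)) auto
  also have "lie_eq X R \<dots> (LAdd (LSmul (lcomb_coeff ((q, d) # xs) p) (mono_term p))
      (lcomb (filter (\<lambda>(q, _). q \<noteq> p) ((q, d) # xs))))"
  proof (cases "q = p")
    case True
    then show ?thesis
      using 2(2,3) lcomb_vars_filter[of _ xs] by (simp, intro lie_eq_add_smul_left) auto
  next
    case False
    then show ?thesis
      using 2(2,3) lcomb_vars_filter[of _ xs]
      by (simp, intro lie_eq_add_left_commute) (simp_all, blast)
  qed
  finally show ?case .
qed

lemma mono_vars_subset_lcomb_vars: "(p, c) \<in> set xs \<Longrightarrow> mono_vars p \<subseteq> lcomb_vars xs"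
  by (induction xs rule: lcomb_vars.induct) auto

lemma lcomb_coeff_filter:
  "lcomb_coeff (filter (\<lambda>(q, _). q \<noteq> p) xs) r = (if r = p then 0 else lcomb_coeff xs r)"
  by (induction xs) auto

lemma lie_eq_lcomb_if_coeff_eq:
  "lcomb_vars xs \<subseteq> X \<Longrightarrow> lcomb_vars ys \<subseteq> X \<Longrightarrow> lcomb_coeff xs = lcomb_coeff ys \<Longrightarrow>
     lie_eq X R (lcomb xs) (lcomb ys)"
proof (induction "length xs + length ys" arbitrary: xs ys rule: less_induct)
  case less
  show ?case
  proof (cases "xs @ ys = []")
    case True
    then show ?thesis by (simp add: lie_eq.refl)
  next
    case False
    define p where "p = fst (hd (xs @ ys))"
    define c where "c = snd (hd (xs @ ys))"
    have pc: "(p, c) \<in> set xs \<or> (p, c) \<in> set ys"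
      using hd_in_set[OF False] unfolding p_def c_def by simp
    have vars_p: "mono_vars p \<subseteq> X"
      using pc less.prems(1,2) mono_vars_subset_lcomb_vars[of p c] by blast
    define xs' where "xs' = filter (\<lambda>(q, _). q \<noteq> p) xs"
    define ys' where "ys' = filter (\<lambda>(q, _). q \<noteq> p) ys"
    have "length xs' + length ys' < length xs + length ys"
    proof -
      have "length xs' \<le> length xs" "length ys' \<le> length ys"
        unfolding xs'_def ys'_def by auto
      moreover have "length xs' < length xs \<or> length ys' < length ys"
        using pc unfolding xs'_def ys'_def
        using length_filter_less[of "(p, c)" xs "(\<lambda>(q, _). q \<noteq> p)"]
          length_filter_less[of "(p, c)" ys "(\<lambda>(q, _). q \<noteq> p)"] by auto
      ultimately show ?thesis by linarith
    qed
    moreover have "lcomb_vars xs' \<subseteq> X" "lcomb_vars ys' \<subseteq> X"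
      using less.prems(1,2) lcomb_vars_filter[of _ xs] lcomb_vars_filter[of _ ys]
      unfolding xs'_def ys'_def by blast+
    moreover have "lcomb_coeff xs' = lcomb_coeff ys'"
      using less.prems(3) by (auto simp: fun_eq_iff xs'_def ys'_def lcomb_coeff_filter)
    ultimately have IH: "lie_eq X R (lcomb xs') (lcomb ys')" using less.hyps by blast
    have "lie_eq X R (lcomb xs) (LAdd (LSmul (lcomb_coeff xs p) (mono_term p)) (lcomb xs'))"
      unfolding xs'_def using less.prems(1) vars_p by (rule lie_eq_lcomb_extract)
    also have "lie_eq X R \<dots> (LAdd (LSmul (lcomb_coeff ys p) (mono_term p)) (lcomb ys'))"
      unfolding less.prems(3) using IH vars_p by (intro lie_eq_cong_intros) auto
    also have "lie_eq X R \<dots> (lcomb ys)"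
      unfolding ys'_def using less.prems(2) vars_p by (rule lie_eq.sym[OF lie_eq_lcomb_extract])
    finally show ?thesis .
  qed
qed

theorem lie_eq_if_lcoeff_eq:
  assumes "lwf X a" "lwf X b" "lcoeff a = lcoeff b"
  shows "lie_eq X R a b"
proof -
  have "lie_eq X R a (lcomb (expand a))" using assms(1) by (rule lie_eq_expand)
  also have "lie_eq X R \<dots> (lcomb (expand b))"
    using assms lcomb_vars_expand[of a] lcomb_vars_expand[of b]
    by (intro lie_eq_lcomb_if_coeff_eq) (auto simp: lcomb_coeff_expand lwf_def)
  also have "lie_eq X R \<dots> b" using assms(2) by (rule lie_eq.sym[OF lie_eq_expand])
  finally show ?thesis .
qed

lemma lie_eq_by_lcoeffs:
  assumes "lwf X a" "lwf X b"
    and "\<And>x. lcoeff a (MVar x) = lcoeff b (MVar x)"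
    and "\<And>p q. lcoeff a (MBr p q) = lcoeff b (MBr p q)"
  shows "lie_eq X R a b"
proof (rule lie_eq_if_lcoeff_eq[OF assms(1,2)])
  show "lcoeff a = lcoeff b"
  proof
    fix p show "lcoeff a p = lcoeff b p" using assms(3,4) by (cases p) auto
  qed
qed

lemma lie_eq_by_lcoeffs_mod:
  assumes "lwf X a" "lwf X b" "lie_eq X R z LZero"
    and "\<And>x. lcoeff a (MVar x) = lcoeff (LAdd b z) (MVar x)"
    and "\<And>p q. lcoeff a (MBr p q) = lcoeff (LAdd b z) (MBr p q)"
  shows "lie_eq X R a b"
proof -
  have z: "lwf X z" using assms(3) by (rule lie_eq_lwfD1)
  have "lie_eq X R a (LAdd b z)" using assms z by (intro lie_eq_by_lcoeffs) auto
  also have "lie_eq X R \<dots> (LAdd b LZero)" using assms by (intro lie_eq_cong_intros) auto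
  also have "lie_eq X R \<dots> b" using assms by (intro lie_eq.add_zero)
  finally show ?thesis .
qed
lemma lie_eq_trans_lcoeffs:
  assumes "lie_eq X R a a'" "lwf X b"
    and "\<And>x. lcoeff a' (MVar x) = lcoeff b (MVar x)"
    and "\<And>p q. lcoeff a' (MBr p q) = lcoeff b (MBr p q)"
  shows "lie_eq X R a b"
  using assms(1) lie_eq_by_lcoeffs[OF lie_eq_lwfD2[OF assms(1)] assms(2-4)] by (rule lie_eq.trans)

abbreviation jacobiator ::
    "('a, 'k::field) lterm \<Rightarrow> ('a, 'k) lterm \<Rightarrow> ('a, 'k) lterm \<Rightarrow> ('a, 'k) lterm"
  where
  "jacobiator x y z \<equiv> LAdd (LBr x (LBr y z)) (LAdd (LBr y (LBr z x)) (LBr z (LBr x y)))"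

abbreviation br_sym :: "('a, 'k::field) lterm \<Rightarrow> ('a, 'k) lterm \<Rightarrow> ('a, 'k) lterm" where
  "br_sym a b \<equiv> LAdd (LBr a b) (LBr b a)"

lemma lie_eq_anticomm:
  assumes "lwf X a" "lwf X b"
  shows "lie_eq X R (br_sym a b) LZero"
proof -
  have "lie_eq X R (br_sym a b) (lsub (LBr (LAdd a b) (LAdd a b)) (LAdd (LBr a a) (LBr b b)))"
    using assms by (intro lie_eq_by_lcoeffs) (auto simp: algebra_simps)
  also have "lie_eq X R \<dots> (lsub LZero (LAdd LZero LZero))"
    using assms by (intro lie_eq_cong_intros lie_eq.br_alt) auto
  also have "lie_eq X R \<dots> LZero"
    by (intro lie_eq_by_lcoeffs) auto
  finally show ?thesis .
qed

lemma lie_eq_jacobi_leibniz: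
  assumes "lwf X a" "lwf X b" "lwf X c"
  shows "lie_eq X R (LBr a (LBr b c)) (LAdd (LBr (LBr a b) c) (LBr b (LBr a c)))"
proof -
  have "lie_eq X R (LBr a (LBr b c))
      (LAdd (jacobiator a b c) (lsub (LAdd (LBr (LBr a b) c) (LBr b (LBr a c)))
        (LAdd (br_sym (LBr a b) c) (LBr b (br_sym c a)))))"
    using assms by (intro lie_eq_by_lcoeffs) (auto simp: algebra_simps)
  also have "lie_eq X R \<dots> (LAdd LZero (lsub (LAdd (LBr (LBr a b) c) (LBr b (LBr a c)))
           (LAdd LZero (LBr b LZero))))"
    using assms by (intro lie_eq_cong_intros lie_eq.jacobi lie_eq_anticomm) auto
  also have "lie_eq X R \<dots> (LAdd (LBr (LBr a b) c) (LBr b (LBr a c)))"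
    using assms by (intro lie_eq_by_lcoeffs) (auto simp: algebra_simps)
  finally show ?thesis .
qed

lemma lie_eq_br_left_jacobi:
  assumes "lwf X a" "lwf X b" "lwf X c"
  shows "lie_eq X R (LBr (LBr a b) c) (lsub (LBr a (LBr b c)) (LBr b (LBr a c)))"
proof -
  have "lie_eq X R (LBr (LBr a b) c)
      (lsub (LAdd (LBr (LBr a b) c) (LBr b (LBr a c))) (LBr b (LBr a c)))"
    using assms by (intro lie_eq_by_lcoeffs) (auto simp: algebra_simps)
  also have "lie_eq X R \<dots> (lsub (LBr a (LBr b c)) (LBr b (LBr a c)))"
    using assms by (intro lie_eq_cong_intros lie_eq.sym[OF lie_eq_jacobi_leibniz]) auto
  finally show ?thesis .
qed

lemma lie_eq_br_swap:
  assumes "lwf X a" "lwf X b"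
  shows "lie_eq X R (LBr a b) (LSmul (-1) (LBr b a))"
  by (rule lie_eq_by_lcoeffs_mod[where z = "br_sym a b"]) (use assms in \<open>auto intro: lie_eq_anticomm\<close>)

lemma lie_eq_zero_addI: "lie_eq X R a LZero \<Longrightarrow> lie_eq X R b LZero \<Longrightarrow> lie_eq X R (LAdd a b) LZero"
  using lie_eq.trans[OF lie_eq.cong_add lie_eq.add_zero[OF lwf_simps(2)]] .

lemma lie_eq_zero_smulI: "lie_eq X R a LZero \<Longrightarrow> lie_eq X R (LSmul c a) LZero"
  using lie_eq.trans[OF lie_eq.cong_smul lie_eq_smul_zero] .

lemma lie_eq_zero_brI:
  assumes "lwf X a" "lie_eq X R b LZero"
  shows "lie_eq X R (LBr a b) LZero"
proof -
  have "lie_eq X R (LBr a b) (LBr a LZero)" using assms by (intro lie_eq_cong_intros)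
  also have "lie_eq X R \<dots> LZero" using assms(1) by (rule lie_eq_br_zero_right)
  finally show ?thesis .
qed

lemmas lie_eq_zero_intros =
  lie_eq_anticomm lie_eq.jacobi lie_eq_zero_addI lie_eq_zero_smulI lie_eq_zero_brI

section \<open>Derivations of free Lie algebras\<close>

primrec der_ext :: "('a \<Rightarrow> ('a, 'k::field) lterm) \<Rightarrow> ('a, 'k) lterm \<Rightarrow> ('a, 'k) lterm" where
  "der_ext f (Gen a) = f a"
| "der_ext f LZero = LZero"
| "der_ext f (LAdd s t) = LAdd (der_ext f s) (der_ext f t)"
| "der_ext f (LSmul c t) = LSmul c (der_ext f t)"
| "der_ext f (LBr s t) = LAdd (LBr (der_ext f s) t) (LBr s (der_ext f t))"

lemma lwf_der_ext: "\<forall>a\<in>Y. lwf Y (f a) \<Longrightarrow> lwf Y t \<Longrightarrow> lwf Y (der_ext f t)"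
  by (induction t) auto

lemma lie_eq_der_ext:
  assumes f: "\<forall>a\<in>Y. lwf Y (f a)" and "lie_eq Y {} s t"
  shows "lie_eq Y {} (der_ext f s) (der_ext f t)"
  using assms(2)
proof (induction rule: lie_eq.induct)
  case (sym s t)
  show ?case using sym.IH by (rule lie_eq.sym)
next
  case (trans s t u)
  show ?case using trans.IH by (rule lie_eq.trans)
next
  case (cong_add s s' t t')
  then show ?case by (simp add: lie_eq.cong_add)
next
  case (cong_smul s s' c)
  then show ?case by (simp add: lie_eq.cong_smul)
next
  case (cong_br s s' t t')
  then show ?case using lie_eq_lwf by (simp add: lie_eq.cong_add lie_eq.cong_br)
next
  case (br_alt x)
  then show ?case using f lwf_der_ext[OF f] by (simp add: lie_eq_anticomm)
next
  case (jacobi x y z)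
  have w: "lwf Y (der_ext f x)" "lwf Y (der_ext f y)" "lwf Y (der_ext f z)"
    using jacobi lwf_der_ext[OF f] by auto
  have "lie_eq Y {} (der_ext f (jacobiator x y z))
     (LAdd (jacobiator (der_ext f x) y z)
       (LAdd (jacobiator x (der_ext f y) z) (jacobiator x y (der_ext f z))))"
    using jacobi w by simp (intro lie_eq_by_lcoeffs, auto simp: algebra_simps)
  also have "lie_eq Y {} \<dots> (LAdd LZero (LAdd LZero LZero))"
    using jacobi w by (intro lie_eq_cong_intros lie_eq.jacobi) auto
  also have "lie_eq Y {} \<dots> LZero" by (intro lie_eq_by_lcoeffs) auto
  finally show ?case by simp
qed (use f lwf_der_ext[OF f] in \<open>auto intro!: lie_eq_by_lcoeffs simp: algebra_simps\<close>)

definition is_der :: "'a set \<Rightarrow> (('a, 'k::field) lterm \<Rightarrow> ('a, 'k) lterm) \<Rightarrow> bool" where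
  "is_der Y A \<longleftrightarrow> (\<forall>u. lwf Y u \<longrightarrow> lwf Y (A u))
     \<and> (\<forall>u u'. lie_eq Y {} u u' \<longrightarrow> lie_eq Y {} (A u) (A u'))
     \<and> (\<forall>a b. lwf Y a \<longrightarrow> lwf Y b \<longrightarrow> lie_eq Y {} (A (LAdd a b)) (LAdd (A a) (A b)))
     \<and> (\<forall>c a. lwf Y a \<longrightarrow> lie_eq Y {} (A (LSmul c a)) (LSmul c (A a)))
     \<and> (\<forall>a b. lwf Y a \<longrightarrow> lwf Y b \<longrightarrow> lie_eq Y {} (A (LBr a b)) (LAdd (LBr (A a) b) (LBr a (A b))))"

lemma is_derD:
  assumes "is_der Y A"
  shows "lwf Y u \<Longrightarrow> lwf Y (A u)"
    and "lie_eq Y {} u u' \<Longrightarrow> lie_eq Y {} (A u) (A u')"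
    and "lwf Y a \<Longrightarrow> lwf Y b \<Longrightarrow> lie_eq Y {} (A (LAdd a b)) (LAdd (A a) (A b))"
    and "lwf Y a \<Longrightarrow> lie_eq Y {} (A (LSmul c a)) (LSmul c (A a))"
    and "lwf Y a \<Longrightarrow> lwf Y b \<Longrightarrow> lie_eq Y {} (A (LBr a b)) (LAdd (LBr (A a) b) (LBr a (A b)))"
  using assms unfolding is_der_def by blast+

lemma is_der_diff:
  assumes A: "is_der Y A" and w: "lwf Y a" "lwf Y b"
  shows "lie_eq Y {} (A (lsub a b)) (lsub (A a) (A b))"
proof -
  have "lie_eq Y {} (A (lsub a b)) (LAdd (A a) (A (LSmul (-1) b)))"
    using w by (intro is_derD(3)[OF A]) auto
  also have "lie_eq Y {} \<dots> (lsub (A a) (A b))"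
    using w is_derD(1)[OF A] by (intro lie_eq_cong_intros is_derD(4)[OF A]) auto
  finally show ?thesis .
qed

lemma is_der_map_zero:
  assumes A: "is_der Y A"
  shows "lie_eq Y {} (A LZero) LZero"
proof -
  have w: "lwf Y (A LZero)" using is_derD(1)[OF A] by simp
  have "lie_eq Y {} (A LZero) (A (LSmul 0 LZero))"
    by (intro is_derD(2)[OF A] lie_eq_by_lcoeffs) auto
  also have "lie_eq Y {} \<dots> (LSmul 0 (A LZero))"
    by (intro is_derD(4)[OF A]) auto
  also have "lie_eq Y {} \<dots> LZero"
    using w by (intro lie_eq_by_lcoeffs) auto
  finally show ?thesis .
qed

lemma is_der_diff_add_br:
  assumes A: "is_der Y A" and w: "lwf Y a" "lwf Y b" "lwf Y c" "lwf Y d"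
  shows "lie_eq Y {} (A (LAdd (lsub a b) (LBr c d)))
     (LAdd (lsub (A a) (A b)) (LAdd (LBr (A c) d) (LBr c (A d))))"
proof -
  have "lie_eq Y {} (A (LAdd (lsub a b) (LBr c d))) (LAdd (A (lsub a b)) (A (LBr c d)))"
    using w by (intro is_derD(3)[OF A]) auto
  also have "lie_eq Y {} \<dots> (LAdd (lsub (A a) (A b)) (LAdd (LBr (A c) d) (LBr c (A d))))"
    using w by (intro lie_eq_cong_intros is_der_diff[OF A] is_derD(5)[OF A]) auto
  finally show ?thesis .
qed

lemma is_der_der_ext: "\<forall>a\<in>Y. lwf Y (f a) \<Longrightarrow> is_der Y (der_ext f)"
  unfolding is_der_def using lwf_der_ext lie_eq_der_ext
  by (auto intro!: lie_eq.refl simp: lwf_der_ext)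

lemma is_der_zero: "is_der Y (\<lambda>u. LZero)"
  unfolding is_der_def by (auto intro!: lie_eq_by_lcoeffs lie_eq.refl)

lemma is_der_add:
  assumes A: "is_der Y A" and B: "is_der Y B"
  shows "is_der Y (\<lambda>u. LAdd (A u) (B u))"
  unfolding is_der_def
proof (intro conjI allI impI)
  note a1 = is_derD(1)[OF A] and b1 = is_derD(1)[OF B]
  show "lwf Y (LAdd (A u) (B u))" if "lwf Y u" for u using that a1 b1 by simp
  show "lie_eq Y {} (LAdd (A u) (B u)) (LAdd (A u') (B u'))" if "lie_eq Y {} u u'" for u u'
    using that by (intro lie_eq.cong_add is_derD(2)[OF A] is_derD(2)[OF B])
  fix a b :: "('a, 'b) lterm" assume w: "lwf Y a" "lwf Y b"
  show "lie_eq Y {} (LAdd (A (LAdd a b)) (B (LAdd a b))) (LAdd (LAdd (A a) (B a)) (LAdd (A b) (B b)))"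
    by (rule lie_eq_trans_lcoeffs[OF lie_eq.cong_add[OF is_derD(3)[OF A w] is_derD(3)[OF B w]]])
      (use w a1 b1 in \<open>auto simp: algebra_simps\<close>)
  show "lie_eq Y {} (LAdd (A (LBr a b)) (B (LBr a b)))
     (LAdd (LBr (LAdd (A a) (B a)) b) (LBr a (LAdd (A b) (B b))))"
    by (rule lie_eq_trans_lcoeffs[OF lie_eq.cong_add[OF is_derD(5)[OF A w] is_derD(5)[OF B w]]])
      (use w a1 b1 in \<open>auto simp: algebra_simps\<close>)
next
  note a1 = is_derD(1)[OF A] and b1 = is_derD(1)[OF B]
  fix c and a :: "('a, 'b) lterm" assume w: "lwf Y a"
  show "lie_eq Y {} (LAdd (A (LSmul c a)) (B (LSmul c a))) (LSmul c (LAdd (A a) (B a)))"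
    by (rule lie_eq_trans_lcoeffs[OF lie_eq.cong_add[OF is_derD(4)[OF A w] is_derD(4)[OF B w]]])
      (use w a1 b1 in \<open>auto simp: algebra_simps\<close>)
qed

lemma is_der_smul:
  assumes A: "is_der Y A"
  shows "is_der Y (\<lambda>u. LSmul c (A u))"
  unfolding is_der_def
proof (intro conjI allI impI)
  note a1 = is_derD(1)[OF A]
  show "lwf Y (LSmul c (A u))" if "lwf Y u" for u using that a1 by simp
  show "lie_eq Y {} (LSmul c (A u)) (LSmul c (A u'))" if "lie_eq Y {} u u'" for u u'
    using that by (intro lie_eq.cong_smul is_derD(2)[OF A])
  fix a b :: "('a, 'b) lterm" assume w: "lwf Y a" "lwf Y b"
  show "lie_eq Y {} (LSmul c (A (LAdd a b))) (LAdd (LSmul c (A a)) (LSmul c (A b)))"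
    by (rule lie_eq_trans_lcoeffs[OF lie_eq.cong_smul[OF is_derD(3)[OF A w]]])
      (use w a1 in \<open>auto simp: algebra_simps\<close>)
  show "lie_eq Y {} (LSmul c (A (LBr a b)))
     (LAdd (LBr (LSmul c (A a)) b) (LBr a (LSmul c (A b))))"
    by (rule lie_eq_trans_lcoeffs[OF lie_eq.cong_smul[OF is_derD(5)[OF A w]]])
      (use w a1 in \<open>auto simp: algebra_simps\<close>)
next
  note a1 = is_derD(1)[OF A]
  fix d and a :: "('a, 'b) lterm" assume w: "lwf Y a"
  show "lie_eq Y {} (LSmul c (A (LSmul d a))) (LSmul d (LSmul c (A a)))"
    by (rule lie_eq_trans_lcoeffs[OF lie_eq.cong_smul[OF is_derD(4)[OF A w]]])
      (use w a1 in \<open>auto simp: algebra_simps\<close>)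
qed

abbreviation der_comm ::
    "(('a, 'k::field) lterm \<Rightarrow> ('a, 'k) lterm) \<Rightarrow> (('a, 'k) lterm \<Rightarrow> ('a, 'k) lterm) \<Rightarrow>
     ('a, 'k) lterm \<Rightarrow> ('a, 'k) lterm"
  where "der_comm A B u \<equiv> lsub (A (B u)) (B (A u))"

lemma is_der_comp_br:
  assumes A: "is_der Y A" and B: "is_der Y B" and w: "lwf Y x" "lwf Y y"
  shows "lie_eq Y {} (A (B (LBr x y)))
    (LAdd (LAdd (LBr (A (B x)) y) (LBr (B x) (A y))) (LAdd (LBr (A x) (B y)) (LBr x (A (B y)))))"
proof -
  note b1 = is_derD(1)[OF B]
  have "lie_eq Y {} (A (B (LBr x y))) (A (LAdd (LBr (B x) y) (LBr x (B y))))"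
    using w by (intro is_derD(2)[OF A] is_derD(5)[OF B])
  also have "lie_eq Y {} \<dots> (LAdd (A (LBr (B x) y)) (A (LBr x (B y))))"
    using w b1 by (intro is_derD(3)[OF A]) auto
  also have "lie_eq Y {} \<dots> (LAdd (LAdd (LBr (A (B x)) y) (LBr (B x) (A y)))
      (LAdd (LBr (A x) (B y)) (LBr x (A (B y)))))"
    using w b1 by (intro lie_eq_cong_intros is_derD(5)[OF A]) auto
  finally show ?thesis .
qed

lemma is_der_comm:
  assumes A: "is_der Y A" and B: "is_der Y B"
  shows "is_der Y (der_comm A B)"
  unfolding is_der_def
proof (intro conjI allI impI)
  note a1 = is_derD(1)[OF A] and b1 = is_derD(1)[OF B]
  show "lwf Y (der_comm A B u)" if "lwf Y u" for u using that a1 b1 by simp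
  show "lie_eq Y {} (der_comm A B u) (der_comm A B u')" if "lie_eq Y {} u u'" for u u'
    using that by (intro lie_eq_cong_intros is_derD(2)[OF A] is_derD(2)[OF B])
  fix x y :: "('a, 'b) lterm" assume w: "lwf Y x" "lwf Y y"
  have "lie_eq Y {} (A (B (LAdd x y))) (LAdd (A (B x)) (A (B y)))"
    "lie_eq Y {} (B (A (LAdd x y))) (LAdd (B (A x)) (B (A y)))"
    using w a1 b1 by (meson A B is_derD lie_eq.trans lwf_simps(3))+
  then have "lie_eq Y {} (der_comm A B (LAdd x y))
      (lsub (LAdd (A (B x)) (A (B y))) (LAdd (B (A x)) (B (A y))))"
    by (intro lie_eq_cong_intros)
  also have "lie_eq Y {} \<dots> (LAdd (der_comm A B x) (der_comm A B y))"
    using w a1 b1 by (intro lie_eq_by_lcoeffs) (auto simp: algebra_simps)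
  finally show "lie_eq Y {} (der_comm A B (LAdd x y)) (LAdd (der_comm A B x) (der_comm A B y))" .
  have "lie_eq Y {} (der_comm A B (LBr x y))
      (lsub (LAdd (LAdd (LBr (A (B x)) y) (LBr (B x) (A y))) (LAdd (LBr (A x) (B y)) (LBr x (A (B y)))))
        (LAdd (LAdd (LBr (B (A x)) y) (LBr (A x) (B y))) (LAdd (LBr (B x) (A y)) (LBr x (B (A y))))))"
    using w by (intro lie_eq_cong_intros is_der_comp_br[OF A B] is_der_comp_br[OF B A])
  also have "lie_eq Y {} \<dots> (LAdd (LBr (der_comm A B x) y) (LBr x (der_comm A B y)))"
    using w a1 b1 by (intro lie_eq_by_lcoeffs) (auto simp: algebra_simps)
  finally show "lie_eq Y {} (der_comm A B (LBr x y))
      (LAdd (LBr (der_comm A B x) y) (LBr x (der_comm A B y)))" .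
next
  note a1 = is_derD(1)[OF A] and b1 = is_derD(1)[OF B]
  fix c and x :: "('a, 'b) lterm" assume w: "lwf Y x"
  have "lie_eq Y {} (A (B (LSmul c x))) (LSmul c (A (B x)))"
    "lie_eq Y {} (B (A (LSmul c x))) (LSmul c (B (A x)))"
    using w by (meson A B is_derD lie_eq.trans)+
  then have "lie_eq Y {} (der_comm A B (LSmul c x)) (lsub (LSmul c (A (B x))) (LSmul c (B (A x))))"
    by (intro lie_eq_cong_intros)
  also have "lie_eq Y {} \<dots> (LSmul c (der_comm A B x))"
    using w a1 b1 by (intro lie_eq_by_lcoeffs) (auto simp: algebra_simps)
  finally show "lie_eq Y {} (der_comm A B (LSmul c x)) (LSmul c (der_comm A B x))" .
qed

definition op_eq ::
    "'a set \<Rightarrow> (('a, 'k::field) lterm \<Rightarrow> ('a, 'k) lterm) \<Rightarrow> (('a, 'k) lterm \<Rightarrow> ('a, 'k) lterm) \<Rightarrow> bool"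
  where
  "op_eq Y A B \<longleftrightarrow> (\<forall>u. lwf Y u \<longrightarrow> lie_eq Y {} (A u) (B u))"

lemma op_eq_refl: "is_der Y A \<Longrightarrow> op_eq Y A A"
  unfolding op_eq_def by (auto intro: lie_eq.refl is_derD(1))

lemma op_eq_sym: "op_eq Y A B \<Longrightarrow> op_eq Y B A"
  unfolding op_eq_def by (auto intro: lie_eq.sym)

lemma op_eq_trans: "op_eq Y A B \<Longrightarrow> op_eq Y B C \<Longrightarrow> op_eq Y A C"
  unfolding op_eq_def by (meson lie_eq.trans)

lemma op_eq_lie_eq:
  assumes "is_der Y A" "op_eq Y A B" "lie_eq Y {} u v"
  shows "lie_eq Y {} (A u) (B v)"
proof -
  have "lie_eq Y {} (A u) (A v)" using assms(1,3) by (rule is_derD(2))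
  also have "lie_eq Y {} \<dots> (B v)" using assms(2) lie_eq_lwfD2[OF assms(3)] unfolding op_eq_def by simp
  finally show ?thesis .
qed

lemma op_eq_if_eq_on_gens:
  assumes A: "is_der Y A" and B: "is_der Y B" and g: "\<forall>a\<in>Y. lie_eq Y {} (A (Gen a)) (B (Gen a))"
  shows "op_eq Y A B"
  unfolding op_eq_def
proof (intro allI impI)
  note a1 = is_derD(1)[OF A] and b1 = is_derD(1)[OF B]
  fix u :: "('a, 'b) lterm" assume "lwf Y u"
  then show "lie_eq Y {} (A u) (B u)"
  proof (induction u)
    case (Gen x)
    then show ?case using g by simp
  next
    case LZero
    show ?case by (rule lie_eq.trans[OF is_der_map_zero[OF A] lie_eq.sym[OF is_der_map_zero[OF B]]])
  next
    case (LAdd s t)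
    then have w: "lwf Y s" "lwf Y t" by auto
    have "lie_eq Y {} (A (LAdd s t)) (LAdd (A s) (A t))" by (rule is_derD(3)[OF A w])
    also have "lie_eq Y {} \<dots> (LAdd (B s) (B t))" using LAdd w by (intro lie_eq.cong_add) auto
    also have "lie_eq Y {} \<dots> (B (LAdd s t))" by (rule lie_eq.sym[OF is_derD(3)[OF B w]])
    finally show ?case .
  next
    case (LSmul c t)
    then have w: "lwf Y t" by auto
    have "lie_eq Y {} (A (LSmul c t)) (LSmul c (A t))" by (rule is_derD(4)[OF A w])
    also have "lie_eq Y {} \<dots> (LSmul c (B t))" using LSmul w by (intro lie_eq.cong_smul) auto
    also have "lie_eq Y {} \<dots> (B (LSmul c t))" by (rule lie_eq.sym[OF is_derD(4)[OF B w]])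
    finally show ?case .
  next
    case (LBr s t)
    then have w: "lwf Y s" "lwf Y t" by auto
    have "lie_eq Y {} (A (LBr s t)) (LAdd (LBr (A s) t) (LBr s (A t)))" by (rule is_derD(5)[OF A w])
    also have "lie_eq Y {} \<dots> (LAdd (LBr (B s) t) (LBr s (B t)))"
      using LBr w by (intro lie_eq.cong_add lie_eq.cong_br lie_eq.refl) auto
    also have "lie_eq Y {} \<dots> (B (LBr s t))" by (rule lie_eq.sym[OF is_derD(5)[OF B w]])
    finally show ?case .
  qed
qed

section \<open>Representations in Der(F) \<ltimes> F\<close>

text \<open>The vector part of the bracket \<open>[(A, a), (B, b)] = ([A, B], A b - B a + [a, b])\<close>
  in the semidirect product of the derivation algebra with the free Lie algebra.\<close>
abbreviation sdp_vec_br ::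
    "(('a, 'k::field) lterm \<Rightarrow> ('a, 'k) lterm) \<Rightarrow> ('a, 'k) lterm \<Rightarrow>
     (('a, 'k) lterm \<Rightarrow> ('a, 'k) lterm) \<Rightarrow> ('a, 'k) lterm \<Rightarrow> ('a, 'k) lterm"
  where "sdp_vec_br A a B b \<equiv> LAdd (lsub (A b) (B a)) (LBr a b)"

lemma der_comm_add_left:
  assumes A: "is_der Y A" and B: "is_der Y B" and C: "is_der Y C"
    and w: "lwf Y u"
  shows "lie_eq Y {} (der_comm (\<lambda>u. LAdd (A u) (B u)) C u) (LAdd (der_comm A C u) (der_comm B C u))"
  by (rule lie_eq_trans_lcoeffs,
      (rule is_derD(3)[OF C] lie_eq_cong_intros
        | simp add: w is_derD(1)[OF A] is_derD(1)[OF B] is_derD(1)[OF C] algebra_simps)+)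

lemma sdp_vec_br_add_left:
  assumes A: "is_der Y A" and B: "is_der Y B" and C: "is_der Y C"
    and w: "lwf Y a" "lwf Y b" "lwf Y c"
  shows "lie_eq Y {}
    (sdp_vec_br (\<lambda>u. LAdd (A u) (B u)) (LAdd a b) C c) (LAdd (sdp_vec_br A a C c) (sdp_vec_br B b C c))"
  by (rule lie_eq_trans_lcoeffs,
      (rule is_derD(3)[OF C] lie_eq_cong_intros
        | simp add: w is_derD(1)[OF A] is_derD(1)[OF B] is_derD(1)[OF C] algebra_simps)+)

lemma der_comm_add_right:
  assumes A: "is_der Y A" and B: "is_der Y B" and C: "is_der Y C"
    and w: "lwf Y u"
  shows "lie_eq Y {} (der_comm A (\<lambda>u. LAdd (B u) (C u)) u) (LAdd (der_comm A B u) (der_comm A C u))"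
  by (rule lie_eq_trans_lcoeffs,
      (rule is_derD(3)[OF A] lie_eq_cong_intros
        | simp add: w is_derD(1)[OF A] is_derD(1)[OF B] is_derD(1)[OF C] algebra_simps)+)

lemma sdp_vec_br_add_right:
  assumes A: "is_der Y A" and B: "is_der Y B" and C: "is_der Y C"
    and w: "lwf Y a" "lwf Y b" "lwf Y c"
  shows "lie_eq Y {}
    (sdp_vec_br A a (\<lambda>u. LAdd (B u) (C u)) (LAdd b c)) (LAdd (sdp_vec_br A a B b) (sdp_vec_br A a C c))"
  by (rule lie_eq_trans_lcoeffs,
      (rule is_derD(3)[OF A] lie_eq_cong_intros
        | simp add: w is_derD(1)[OF A] is_derD(1)[OF B] is_derD(1)[OF C] algebra_simps)+)

lemma der_comm_smul_left:
  assumes A: "is_der Y A" and B: "is_der Y B"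
    and w: "lwf Y u"
  shows "lie_eq Y {} (der_comm (\<lambda>u. LSmul k (A u)) B u) (LSmul k (der_comm A B u))"
  by (rule lie_eq_trans_lcoeffs,
      (rule is_derD(4)[OF B] lie_eq_cong_intros
        | simp add: w is_derD(1)[OF A] is_derD(1)[OF B] algebra_simps)+)

lemma sdp_vec_br_smul_left:
  assumes A: "is_der Y A" and B: "is_der Y B"
    and w: "lwf Y a" "lwf Y b"
  shows "lie_eq Y {} (sdp_vec_br (\<lambda>u. LSmul k (A u)) (LSmul k a) B b) (LSmul k (sdp_vec_br A a B b))"
  by (rule lie_eq_trans_lcoeffs,
      (rule is_derD(4)[OF B] lie_eq_cong_intros
        | simp add: w is_derD(1)[OF A] is_derD(1)[OF B] algebra_simps)+)

lemma der_comm_smul_right: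
  assumes A: "is_der Y A" and B: "is_der Y B"
    and w: "lwf Y u"
  shows "lie_eq Y {} (der_comm A (\<lambda>u. LSmul k (B u)) u) (LSmul k (der_comm A B u))"
  by (rule lie_eq_trans_lcoeffs,
      (rule is_derD(4)[OF A] lie_eq_cong_intros
        | simp add: w is_derD(1)[OF A] is_derD(1)[OF B] algebra_simps)+)

lemma sdp_vec_br_smul_right:
  assumes A: "is_der Y A" and B: "is_der Y B"
    and w: "lwf Y a" "lwf Y b"
  shows "lie_eq Y {} (sdp_vec_br A a (\<lambda>u. LSmul k (B u)) (LSmul k b)) (LSmul k (sdp_vec_br A a B b))"
  by (rule lie_eq_trans_lcoeffs,
      (rule is_derD(4)[OF A] lie_eq_cong_intros
        | simp add: w is_derD(1)[OF A] is_derD(1)[OF B] algebra_simps)+)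

lemma der_comm_self:
  assumes A: "is_der Y A"
    and w: "lwf Y u"
  shows "lie_eq Y {} (der_comm A A u) LZero"
  using w is_derD(1)[OF A] by (intro lie_eq_by_lcoeffs) auto

lemma sdp_vec_br_self:
  assumes A: "is_der Y A"
    and w: "lwf Y a"
  shows "lie_eq Y {} (sdp_vec_br A a A a) LZero"
  by (rule lie_eq_trans_lcoeffs,
      (rule lie_eq.br_alt lie_eq_cong_intros | simp add: w is_derD(1)[OF A] algebra_simps)+)

lemma der_comm_jacobi:
  assumes A: "is_der Y A" and B: "is_der Y B" and C: "is_der Y C"
    and w: "lwf Y u"
  shows "lie_eq Y {}
    (LAdd (der_comm A (der_comm B C) u)
      (LAdd (der_comm B (der_comm C A) u) (der_comm C (der_comm A B) u)))
    LZero"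
  by (rule lie_eq_trans_lcoeffs,
      (rule is_der_diff[OF A] is_der_diff[OF B] is_der_diff[OF C] lie_eq_cong_intros
        | simp add: w is_derD(1)[OF A] is_derD(1)[OF B] is_derD(1)[OF C] algebra_simps)+)

lemma sdp_vec_br_jacobi:
  assumes A: "is_der Y A" and B: "is_der Y B" and C: "is_der Y C"
    and w: "lwf Y a" "lwf Y b" "lwf Y c"
  shows "lie_eq Y {}
    (LAdd (sdp_vec_br A a (der_comm B C) (sdp_vec_br B b C c))
      (LAdd (sdp_vec_br B b (der_comm C A) (sdp_vec_br C c A a))
        (sdp_vec_br C c (der_comm A B) (sdp_vec_br A a B b))))
    LZero"
proof -
  have "lie_eq Y {}
    (LAdd (sdp_vec_br A a (der_comm B C) (sdp_vec_br B b C c))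
      (LAdd (sdp_vec_br B b (der_comm C A) (sdp_vec_br C c A a))
        (sdp_vec_br C c (der_comm A B) (sdp_vec_br A a B b))))
    (LAdd (jacobiator a b c) (LAdd (br_sym (A b) c) (LAdd (br_sym (B c) a) (br_sym (C a) b))))"
    by (rule lie_eq_trans_lcoeffs,
        (rule is_der_diff_add_br[OF A] is_der_diff_add_br[OF B] is_der_diff_add_br[OF C]
          lie_eq_cong_intros
          | simp add: w is_derD(1)[OF A] is_derD(1)[OF B] is_derD(1)[OF C] algebra_simps)+)
  also have "lie_eq Y {} \<dots> LZero"
    using w is_derD(1)[OF A] is_derD(1)[OF B] is_derD(1)[OF C] by (intro lie_eq_zero_intros) auto
  finally show ?thesis .
qed

text \<open>Generator data \<open>e \<mapsto> (D e, P e) \<in> Der(F) \<ltimes> F\<close> (with \<open>F\<close> the free Lie algebra on \<open>Y\<close>)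
  extended to all terms over the generators.\<close>
primrec rep_der ::
    "('b \<Rightarrow> ('a, 'k::field) lterm \<Rightarrow> ('a, 'k) lterm) \<Rightarrow> ('b, 'k) lterm \<Rightarrow> ('a, 'k) lterm \<Rightarrow> ('a, 'k) lterm"
  where
    "rep_der D (Gen e) = D e"
  | "rep_der D LZero = (\<lambda>u. LZero)"
  | "rep_der D (LAdd s t) = (\<lambda>u. LAdd (rep_der D s u) (rep_der D t u))"
  | "rep_der D (LSmul c s) = (\<lambda>u. LSmul c (rep_der D s u))"
  | "rep_der D (LBr s t) = der_comm (rep_der D s) (rep_der D t)"

primrec rep_vec ::
    "('b \<Rightarrow> ('a, 'k::field) lterm \<Rightarrow> ('a, 'k) lterm) \<Rightarrow> ('b \<Rightarrow> ('a, 'k) lterm) \<Rightarrow>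
     ('b, 'k) lterm \<Rightarrow> ('a, 'k) lterm"
  where
    "rep_vec D P (Gen e) = P e"
  | "rep_vec D P LZero = LZero"
  | "rep_vec D P (LAdd s t) = LAdd (rep_vec D P s) (rep_vec D P t)"
  | "rep_vec D P (LSmul c s) = LSmul c (rep_vec D P s)"
  | "rep_vec D P (LBr s t) = sdp_vec_br (rep_der D s) (rep_vec D P s) (rep_der D t) (rep_vec D P t)"

definition rep_eq ::
    "'a set \<Rightarrow> ('b \<Rightarrow> ('a, 'k::field) lterm \<Rightarrow> ('a, 'k) lterm) \<Rightarrow> ('b \<Rightarrow> ('a, 'k) lterm) \<Rightarrow>
     ('b, 'k) lterm \<Rightarrow> ('b, 'k) lterm \<Rightarrow> bool"
  where "rep_eq Y D P s t \<longleftrightarrow>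
    op_eq Y (rep_der D s) (rep_der D t) \<and> lie_eq Y {} (rep_vec D P s) (rep_vec D P t)"

lemmas sdp_lie_axioms =
  der_comm_add_left sdp_vec_br_add_left der_comm_add_right sdp_vec_br_add_right
  der_comm_smul_left sdp_vec_br_smul_left der_comm_smul_right sdp_vec_br_smul_right
  der_comm_self sdp_vec_br_self der_comm_jacobi sdp_vec_br_jacobi

locale sdp_rep =
  fixes X :: "'b set" and Y :: "'a set"
    and D :: "'b \<Rightarrow> ('a, 'k::field) lterm \<Rightarrow> ('a, 'k) lterm" and P :: "'b \<Rightarrow> ('a, 'k) lterm"
  assumes is_der_gen: "e \<in> X \<Longrightarrow> is_der Y (D e)"
    and lwf_gen: "e \<in> X \<Longrightarrow> lwf Y (P e)"
begin

lemma is_der_rep_der: "lwf X s \<Longrightarrow> is_der Y (rep_der D s)"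
  by (induction s) (auto intro: is_der_gen is_der_zero is_der_add is_der_smul is_der_comm)

lemma lwf_rep_der [simp]: "lwf X s \<Longrightarrow> lwf Y u \<Longrightarrow> lwf Y (rep_der D s u)"
  using is_derD(1)[OF is_der_rep_der] .

lemma lwf_rep_vec [simp]: "lwf X s \<Longrightarrow> lwf Y (rep_vec D P s)"
  by (induction s) (auto intro: lwf_gen)

theorem rep_eq_if_lie_eq:
  assumes rels: "\<And>s t. (s, t) \<in> R \<Longrightarrow> lwf X s \<Longrightarrow> lwf X t \<Longrightarrow> rep_eq Y D P s t"
    and "lie_eq X R s t"
  shows "rep_eq Y D P s t"
  using assms(2)
proof (induction rule: lie_eq.induct)
  case (rel s t)
  then show ?case by (rule rels)
next
  case (refl s)
  then show ?case by (simp add: rep_eq_def op_eq_refl is_der_rep_der lie_eq.refl)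
next
  case (sym s t)
  then show ?case by (simp add: rep_eq_def op_eq_sym lie_eq.sym)
next
  case (trans s t u)
  then show ?case unfolding rep_eq_def by (meson op_eq_trans lie_eq.trans)
next
  case (cong_add s s' t t')
  then show ?case unfolding rep_eq_def op_eq_def by (simp add: lie_eq.cong_add)
next
  case (cong_smul s s' c)
  then show ?case unfolding rep_eq_def op_eq_def by (simp add: lie_eq.cong_smul)
next
  case (cong_br s s' t t')
  have s: "is_der Y (rep_der D s)" and t: "is_der Y (rep_der D t)"
    using cong_br.hyps lie_eq_lwf is_der_rep_der by blast+
  from cong_br.IH show ?case
    unfolding rep_eq_def op_eq_def
    by (simp add: lie_eq.cong_add lie_eq.cong_smul lie_eq.cong_br op_eq_lie_eq[OF s] op_eq_lie_eq[OF t]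
        op_eq_def)
qed (auto simp: rep_eq_def op_eq_def algebra_simps is_der_rep_der sdp_lie_axioms
  intro!: lie_eq_by_lcoeffs)

end

lemma triangle_intro:
  "{p, q} \<in> E \<Longrightarrow> {q, r} \<in> E \<Longrightarrow> {p, r} \<in> E \<Longrightarrow> p \<noteq> q \<Longrightarrow> q \<noteq> r \<Longrightarrow> p \<noteq> r \<Longrightarrow>
    triangle E {{p, q}, {q, r}, {p, r}}"
  unfolding triangle_def by (intro conjI exI[of _ p] exI[of _ q] exI[of _ r]) auto

lemma triangleE:
  assumes "triangle E T"
  obtains p q r where "p \<noteq> q" "q \<noteq> r" "p \<noteq> r" "T = {{p, q}, {q, r}, {p, r}}"
    and "{p, q} \<in> E" "{q, r} \<in> E" "{p, r} \<in> E"
proof -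
  from assms have "T \<subseteq> E" "\<exists>p q r. p \<noteq> q \<and> q \<noteq> r \<and> p \<noteq> r \<and> T = {{p, q}, {q, r}, {p, r}}"
    unfolding triangle_def by simp_all
  then show thesis using that by (elim exE conjE) simp
qed

lemma triangle_labelling:
  assumes "triangle E {a, b, c}" "a \<noteq> b" "b \<noteq> c" "a \<noteq> c"
  obtains p q r where "p \<noteq> q" "q \<noteq> r" "p \<noteq> r" "a = {p, q}" "b = {q, r}" "c = {p, r}"
proof -
  obtain x y z where xyz: "x \<noteq> y" "y \<noteq> z" "x \<noteq> z" "{a, b, c} = {{x, y}, {y, z}, {x, z}}"
    using assms(1) by (rule triangleE)
  then have "a = {x, y} \<or> a = {y, z} \<or> a = {x, z}" "b = {x, y} \<or> b = {y, z} \<or> b = {x, z}"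
    "c = {x, y} \<or> c = {y, z} \<or> c = {x, z}"
    by (metis insertCI insertE singletonD)+
  then consider "a = {x, y}" "b = {y, z}" "c = {x, z}" | "a = {x, y}" "b = {x, z}" "c = {y, z}"
    | "a = {y, z}" "b = {x, y}" "c = {x, z}" | "a = {y, z}" "b = {x, z}" "c = {x, y}"
    | "a = {x, z}" "b = {x, y}" "c = {y, z}" | "a = {x, z}" "b = {y, z}" "c = {x, y}"
    using assms(2-4) by (elim disjE) simp_all
  then show thesis
  proof cases
    case 1 then show ?thesis using xyz by (intro that[of x y z]) simp_all
  next
    case 2 then show ?thesis using xyz by (intro that[of y x z]) (simp_all add: insert_commute)
  next
    case 3 then show ?thesis using xyz by (intro that[of z y x]) (simp_all add: insert_commute)
  next
    case 4 then show ?thesis using xyz by (intro that[of y z x]) (simp_all add: insert_commute)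
  next
    case 5 then show ?thesis using xyz by (intro that[of z x y]) (simp_all add: insert_commute)
  next
    case 6 then show ?thesis using xyz by (intro that[of x z y]) (simp_all add: insert_commute)
  qed
qed

lemma holo_rels_commuteI:
  "x \<in> E \<Longrightarrow> y \<in> E \<Longrightarrow> x \<noteq> y \<Longrightarrow> \<not> (\<exists>T. triangle E T \<and> x \<in> T \<and> y \<in> T) \<Longrightarrow>
    (LBr (Gen x) (Gen y), LZero) \<in> holo_rels E"
  unfolding holo_rels_def by (intro UnI1 CollectI exI[of _ x] exI[of _ y]) simp

lemma holo_rels_triangleI:
  "a \<noteq> b \<Longrightarrow> b \<noteq> c \<Longrightarrow> a \<noteq> c \<Longrightarrow> triangle E {a, b, c} \<Longrightarrow>
    (LBr (Gen a) (Gen b), LBr (Gen b) (Gen c)) \<in> holo_rels E"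
  unfolding holo_rels_def by (intro UnI1 UnI2 CollectI exI[of _ a] exI[of _ b] exI[of _ c]) simp

lemma holo_relsE:
  assumes "(s, t) \<in> holo_rels E"
  obtains (commute) x y where "s = LBr (Gen x) (Gen y)" "t = LZero" "x \<in> E" "y \<in> E" "x \<noteq> y"
      "\<not> (\<exists>T. triangle E T \<and> x \<in> T \<and> y \<in> T)"
    | (triangle) a b c where "s = LBr (Gen a) (Gen b)" "t = LBr (Gen b) (Gen c)"
      "a \<noteq> b" "b \<noteq> c" "a \<noteq> c" "triangle E {a, b, c}"
  using assms unfolding holo_rels_def Un_iff
proof (elim disjE CollectE exE conjE)
  fix a b c assume "(s, t) = (LBr (Gen b) (Gen c), LBr (Gen c) (Gen a))"
    "a \<noteq> b" "b \<noteq> c" "a \<noteq> c" "triangle E {a, b, c}"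
  moreover have "{b, c, a} = {a, b, c}" by auto
  ultimately show thesis using triangle[of b c a] by simp
qed (simp_all add: commute triangle)

lemma holo_rels_mono:
  assumes "E' \<subseteq> E"
    and closed: "\<And>T x y. triangle E T \<Longrightarrow> x \<in> T \<Longrightarrow> y \<in> T \<Longrightarrow> x \<noteq> y \<Longrightarrow> x \<in> E' \<Longrightarrow> y \<in> E' \<Longrightarrow> T \<subseteq> E'"
  shows "holo_rels E' \<subseteq> holo_rels E"
proof
  have triangle_E: "triangle E T" if "triangle E' T" for T
    using that assms(1) unfolding triangle_def by blast
  fix st assume "st \<in> holo_rels E'"
  then obtain s t where st: "st = (s, t)" "(s, t) \<in> holo_rels E'" by (cases st) auto
  from st(2) show "st \<in> holo_rels E"
  proof (cases rule: holo_relsE)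
    case (commute x y)
    have "\<not> (\<exists>T. triangle E T \<and> x \<in> T \<and> y \<in> T)"
    proof
      assume "\<exists>T. triangle E T \<and> x \<in> T \<and> y \<in> T"
      then obtain T where T: "triangle E T" "x \<in> T" "y \<in> T" by blast
      then have "T \<subseteq> E'" using closed commute by blast
      then have "triangle E' T" using T(1) unfolding triangle_def by blast
      then show False using T commute by blast
    qed
    then show ?thesis
      unfolding st(1) commute(1,2) using commute(3-5) assms(1) by (intro holo_rels_commuteI) auto
  next
    case (triangle a b c)
    then show ?thesis
      unfolding st(1) triangle(1,2) using triangle(3-6) triangle_E
      by (intro holo_rels_triangleI) auto
  qed
qed

lemma lwf_kill: "lwf X t \<Longrightarrow> lwf (X - V) (kill V t)"
  by (induction t) auto

lemma lie_eq_kill_zero: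
  assumes "lwf V s"
  shows "lie_eq X R (kill V s) LZero"
proof (rule lie_eq_if_lcoeff_eq)
  show "lwf X (kill V s)" using lwf_kill[OF assms, of V] by (auto simp: lwf_def)
  have "lcoeff (kill V s) p = 0" for p
    using assms by (induction s arbitrary: p) (auto split: monomial.split)
  then show "lcoeff (kill V s) = lcoeff LZero" by auto
qed simp

section \<open>The star of a vertex with a complete link\<close>

locale clique_link =
  fixes Vs :: "'v set" and E :: "'v set set" and v :: 'v
  assumes graph: "simple_graph Vs E"
    and link_clique: "{v, a} \<in> E \<Longrightarrow> {v, b} \<in> E \<Longrightarrow> a \<noteq> b \<Longrightarrow> {a, b} \<in> E"
begin

definition star :: "'v set set" where
  "star = {e \<in> E. v \<in> e}"

definition E2 :: "'v set set" where
  "E2 = E - star"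

lemma edge_other_end:
  assumes "e \<in> E" "x \<in> e"
  obtains y where "y \<noteq> x" "e = {x, y}"
  using assms graph unfolding simple_graph_def by fastforce

lemma star_edgeE:
  assumes "w \<in> star"
  obtains s where "s \<noteq> v" "w = {v, s}" "{v, s} \<in> E"
  using assms edge_other_end unfolding star_def by blast

lemma star_subset: "star \<subseteq> E" and E2_subset: "E2 \<subseteq> E"
  unfolding star_def E2_def by auto

lemma lwf_star_E: "lwf star s \<Longrightarrow> lwf E s" and lwf_E2_E: "lwf E2 s \<Longrightarrow> lwf E s"
  using lwf_mono star_subset E2_subset by blast+

lemma holo_rels_E2_subset: "holo_rels E2 \<subseteq> holo_rels E"
proof (rule holo_rels_mono[OF E2_subset])
  fix T x y assume T: "triangle E T" "x \<in> T" "y \<in> T" "x \<noteq> y" "x \<in> E2" "y \<in> E2"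
  obtain p q r where pqr: "p \<noteq> q" "q \<noteq> r" "p \<noteq> r" "T = {{p, q}, {q, r}, {p, r}}"
    "{p, q} \<in> E" "{q, r} \<in> E" "{p, r} \<in> E" using T(1) by (rule triangleE)
  have "x \<union> y = {p, q, r}" using T(2-4) pqr(4) by auto
  moreover have "v \<notin> x" "v \<notin> y" using T(5,6) unfolding E2_def star_def by auto
  ultimately show "T \<subseteq> E2" using pqr unfolding E2_def star_def by auto
qed

definition star_subalg :: "('v set, 'k::field) lterm \<Rightarrow> bool" where
  "star_subalg t \<longleftrightarrow> (\<exists>s. lwf star s \<and> holo_eq E t s)"

lemma star_subalg_lwf: "star_subalg t \<Longrightarrow> lwf E t"
  unfolding star_subalg_def using lie_eq_lwfD1 by blast

lemma star_subalg_holo_eq: "holo_eq E t t' \<Longrightarrow> star_subalg t' \<Longrightarrow> star_subalg t"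
  unfolding star_subalg_def using lie_eq.trans by blast

lemma star_subalg_star: "lwf star s \<Longrightarrow> star_subalg s"
  unfolding star_subalg_def using lie_eq.refl lwf_star_E by blast

lemma star_subalg_add: "star_subalg a \<Longrightarrow> star_subalg b \<Longrightarrow> star_subalg (LAdd a b)"
  unfolding star_subalg_def by (metis lie_eq.cong_add lwf_simps(3))

lemma star_subalg_smul: "star_subalg a \<Longrightarrow> star_subalg (LSmul c a)"
  unfolding star_subalg_def by (metis lie_eq.cong_smul lwf_simps(4))

lemma star_subalg_br: "star_subalg a \<Longrightarrow> star_subalg b \<Longrightarrow> star_subalg (LBr a b)"
  unfolding star_subalg_def by (metis lie_eq.cong_br lwf_simps(5))

lemma triangle_star_edge:
  assumes T: "triangle E T" "x \<in> T" "y \<in> T" and vx: "v \<in> x" and vy: "v \<notin> y"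
  shows "insert v (y - x) \<in> star \<and> triangle E {y, x, insert v (y - x)}
    \<and> x \<noteq> y \<and> x \<noteq> insert v (y - x) \<and> y \<noteq> insert v (y - x)"
proof -
  obtain p q r where pqr: "p \<noteq> q" "q \<noteq> r" "p \<noteq> r" "T = {{p, q}, {q, r}, {p, r}}"
    "{p, q} \<in> E" "{q, r} \<in> E" "{p, r} \<in> E" using T(1) by (rule triangleE)
  have "x = {p, q} \<or> x = {q, r} \<or> x = {p, r}" "y = {p, q} \<or> y = {q, r} \<or> y = {p, r}"
    using T(2,3) pqr(4) by auto
  then have "insert v (y - x) \<in> star \<and> triangle E {insert v (y - x), y, x}
      \<and> insert v (y - x) \<noteq> x \<and> insert v (y - x) \<noteq> y \<and> x \<noteq> y"
    using vx vy pqr T(1) unfolding star_def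
    by (elim disjE) (auto simp: insert_Diff_if insert_commute)
  then show ?thesis by (auto simp: insert_commute)
qed

text \<open>The holonomy relations rewrite \<open>[y, x]\<close>, for \<open>y\<close> off and \<open>x\<close> through \<open>v\<close>, into \<open>0\<close>
  or into the bracket \<open>[x, z]\<close> with the third edge \<open>z\<close> of their triangle, which is again in the star.\<close>
lemma star_subalg_br_E2_star_edge:
  assumes x: "x \<in> star" and y: "y \<in> E2"
  shows "star_subalg (LBr (Gen y) (Gen x) :: ('v set, 'k::field) lterm)"
proof (cases "\<exists>T. triangle E T \<and> y \<in> T \<and> x \<in> T")
  case True
  then obtain T where T: "triangle E T" "y \<in> T" "x \<in> T" by blast
  have "v \<in> x" "v \<notin> y" using x y unfolding star_def E2_def by auto
  note z = triangle_star_edge[OF T(1,3,2) this]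
  let ?z = "insert v (y - x)"
  have "holo_eq E (LBr (Gen y) (Gen x) :: ('v set, 'k) lterm) (LBr (Gen x) (Gen ?z))"
    using z x y star_subset E2_subset by (intro lie_eq.rel holo_rels_triangleI) auto
  moreover have "star_subalg (LBr (Gen x) (Gen ?z) :: ('v set, 'k) lterm)"
    using z x by (intro star_subalg_star) simp
  ultimately show ?thesis by (rule star_subalg_holo_eq)
next
  case False
  have "x \<noteq> y" using x y unfolding star_def E2_def by auto
  then have "holo_eq E (LBr (Gen y) (Gen x) :: ('v set, 'k) lterm) LZero"
    using False x y star_subset E2_subset by (intro lie_eq.rel holo_rels_commuteI) auto
  then show ?thesis by (rule star_subalg_holo_eq) (simp add: star_subalg_star)
qed

lemma star_subalg_br_E2_gen:
  assumes y: "y \<in> E2" and s: "lwf star s"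
  shows "star_subalg (LBr (Gen y) s :: ('v set, 'k::field) lterm)"
  using s
proof (induction s)
  case (Gen x)
  then show ?case using y by (simp add: star_subalg_br_E2_star_edge)
next
  case LZero
  have "holo_eq E (LBr (Gen y) LZero :: ('v set, 'k) lterm) LZero"
    using y E2_subset by (intro lie_eq_br_zero_right) auto
  then show ?case by (rule star_subalg_holo_eq) (simp add: star_subalg_star)
next
  case (LAdd s1 s2)
  have "holo_eq E (LBr (Gen y) (LAdd s1 s2)) (LAdd (LBr (Gen y) s1) (LBr (Gen y) s2))"
    using LAdd.prems y E2_subset by (intro lie_eq.br_add_right) (auto simp: lwf_star_E)
  then show ?case by (rule star_subalg_holo_eq) (use LAdd in \<open>auto intro: star_subalg_add\<close>)
next
  case (LSmul c s1)
  have "holo_eq E (LBr (Gen y) (LSmul c s1)) (LSmul c (LBr (Gen y) s1))"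
    using LSmul.prems y E2_subset by (intro lie_eq.br_smul_right) (auto simp: lwf_star_E)
  then show ?case by (rule star_subalg_holo_eq) (use LSmul in \<open>auto intro: star_subalg_smul\<close>)
next
  case (LBr s1 s2)
  have "holo_eq E (LBr (Gen y) (LBr s1 s2)) (LAdd (LBr (LBr (Gen y) s1) s2) (LBr s1 (LBr (Gen y) s2)))"
    using LBr.prems y E2_subset by (intro lie_eq_jacobi_leibniz) (auto simp: lwf_star_E)
  then show ?case
    by (rule star_subalg_holo_eq)
      (use LBr in \<open>auto intro: star_subalg_add star_subalg_br star_subalg_star\<close>)
qed

lemma star_subalg_br_E2_term:
  assumes "lwf E2 k" "lwf star s"
  shows "star_subalg (LBr k s :: ('v set, 'k::field) lterm)"
  using assms
proof (induction k arbitrary: s)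
  case (Gen y)
  then show ?case by (simp add: star_subalg_br_E2_gen)
next
  case LZero
  have "holo_eq E (LBr LZero s :: ('v set, 'k) lterm) LZero"
    using LZero.prems by (intro lie_eq_br_zero_left lwf_star_E)
  then show ?case by (rule star_subalg_holo_eq) (simp add: star_subalg_star)
next
  case (LAdd k1 k2)
  have "holo_eq E (LBr (LAdd k1 k2) s) (LAdd (LBr k1 s) (LBr k2 s))"
    using LAdd.prems by (intro lie_eq.br_add_left) (auto simp: lwf_star_E lwf_E2_E)
  then show ?case by (rule star_subalg_holo_eq) (use LAdd in \<open>auto intro: star_subalg_add\<close>)
next
  case (LSmul c k1)
  have "holo_eq E (LBr (LSmul c k1) s) (LSmul c (LBr k1 s))"
    using LSmul.prems by (intro lie_eq.br_smul_left) (auto simp: lwf_star_E lwf_E2_E)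
  then show ?case by (rule star_subalg_holo_eq) (use LSmul in \<open>auto intro: star_subalg_smul\<close>)
next
  case (LBr k1 k2)
  have k: "lwf E2 k1" "lwf E2 k2" using LBr.prems by auto
  obtain m1 where m1: "lwf star m1" "holo_eq E (LBr k1 s) m1"
    using LBr.IH(1)[OF k(1) LBr.prems(2)] unfolding star_subalg_def by blast
  obtain m2 where m2: "lwf star m2" "holo_eq E (LBr k2 s) m2"
    using LBr.IH(2)[OF k(2) LBr.prems(2)] unfolding star_subalg_def by blast
  have w: "lwf E k1" "lwf E k2" "lwf E s" using k LBr.prems(2) by (auto simp: lwf_star_E lwf_E2_E)
  then have "holo_eq E (LBr (LBr k1 k2) s) (lsub (LBr k1 (LBr k2 s)) (LBr k2 (LBr k1 s)))"
    by (rule lie_eq_br_left_jacobi)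
  also have "holo_eq E \<dots> (lsub (LBr k1 m2) (LBr k2 m1))"
    using w m1 m2 by (intro lie_eq_cong_intros) auto
  finally show ?case
    by (rule star_subalg_holo_eq) (use LBr.IH k m1 m2 in \<open>auto intro: star_subalg_add star_subalg_smul\<close>)
qed

lemma star_subalg_br_E2:
  assumes "lwf E2 k" "star_subalg s"
  shows "star_subalg (LBr k s :: ('v set, 'k::field) lterm)"
proof -
  obtain s' where s': "lwf star s'" "holo_eq E s s'" using assms(2) unfolding star_subalg_def by blast
  have "holo_eq E (LBr k s) (LBr k s')" using assms(1) s' by (intro lie_eq_cong_intros lwf_E2_E)
  then show ?thesis using assms(1) s'(1) by (rule star_subalg_holo_eq[OF _ star_subalg_br_E2_term])
qed

lemma star_subalg_br_E2_right:
  assumes "lwf E2 k" "star_subalg s"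
  shows "star_subalg (LBr s k :: ('v set, 'k::field) lterm)"
proof -
  have "holo_eq E (LBr s k) (LSmul (-1) (LBr k s))"
    using assms by (intro lie_eq_br_swap) (simp_all add: lwf_E2_E star_subalg_lwf)
  then show ?thesis by (rule star_subalg_holo_eq) (intro star_subalg_smul star_subalg_br_E2 assms)
qed

lemma lwf_kill_star: "lwf E t \<Longrightarrow> lwf E2 (kill star t)"
  unfolding E2_def by (rule lwf_kill)

lemma star_subalg_diff_kill:
  assumes "lwf E t"
  shows "star_subalg (lsub t (kill star t) :: ('v set, 'k::field) lterm)"
  using assms
proof (induction t)
  case (Gen e)
  show ?case
  proof (cases "e \<in> star")
    case True
    then have "holo_eq E (lsub (Gen e) (kill star (Gen e))) (Gen e :: ('v set, 'k) lterm)"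
      using Gen by (intro lie_eq_by_lcoeffs) auto
    then show ?thesis by (rule star_subalg_holo_eq) (simp add: star_subalg_star True)
  next
    case False
    then have "holo_eq E (lsub (Gen e) (kill star (Gen e))) (LZero :: ('v set, 'k) lterm)"
      using Gen by (intro lie_eq_by_lcoeffs) auto
    then show ?thesis by (rule star_subalg_holo_eq) (simp add: star_subalg_star)
  qed
next
  case LZero
  have "holo_eq E (lsub LZero (kill star LZero)) (LZero :: ('v set, 'k) lterm)"
    by (intro lie_eq_by_lcoeffs) auto
  then show ?case by (rule star_subalg_holo_eq) (simp add: star_subalg_star)
next
  case (LAdd t1 t2)
  have "holo_eq E (lsub (LAdd t1 t2) (kill star (LAdd t1 t2)))
      (LAdd (lsub t1 (kill star t1)) (lsub t2 (kill star t2)))"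
    using LAdd.prems lwf_kill_star[THEN lwf_E2_E]
    by (intro lie_eq_by_lcoeffs) (auto simp: algebra_simps)
  then show ?case by (rule star_subalg_holo_eq) (use LAdd in \<open>auto intro: star_subalg_add\<close>)
next
  case (LSmul c t1)
  have "holo_eq E (lsub (LSmul c t1) (kill star (LSmul c t1))) (LSmul c (lsub t1 (kill star t1)))"
    using LSmul.prems lwf_kill_star[THEN lwf_E2_E]
    by (intro lie_eq_by_lcoeffs) (auto simp: algebra_simps)
  then show ?case by (rule star_subalg_holo_eq) (use LSmul in \<open>auto intro: star_subalg_smul\<close>)
next
  case (LBr t1 t2)
  let ?k1 = "kill star t1" and ?k2 = "kill star t2"
  have "holo_eq E (lsub (LBr t1 t2) (kill star (LBr t1 t2)))
      (LAdd (LBr ?k1 (lsub t2 ?k2)) (LAdd (LBr (lsub t1 ?k1) ?k2) (LBr (lsub t1 ?k1) (lsub t2 ?k2))))"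
    using LBr.prems lwf_kill_star[THEN lwf_E2_E]
    by (intro lie_eq_by_lcoeffs) (auto simp: algebra_simps)
  then show ?case
    by (rule star_subalg_holo_eq) (use LBr lwf_kill_star in
      \<open>auto intro: star_subalg_add star_subalg_br star_subalg_br_E2 star_subalg_br_E2_right\<close>)
qed

theorem star_subalg_if_kill_zero:
  assumes "lwf E t" "holo_eq E2 (kill star t) (LZero :: ('v set, 'k::field) lterm)"
  shows "star_subalg t"
proof -
  have k: "holo_eq E (kill star t) LZero"
    using assms(2) E2_subset holo_rels_E2_subset by (rule lie_eq_mono)
  have w: "lwf E (kill star t)" using lwf_E2_E[OF lwf_kill_star[OF assms(1)]] .
  have "holo_eq E t (LAdd (lsub t (kill star t)) (kill star t))"
    using assms(1) w by (intro lie_eq_by_lcoeffs) auto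
  also have "holo_eq E \<dots> (LAdd (lsub t (kill star t)) LZero)"
    using assms(1) w k by (intro lie_eq_cong_intros) auto
  also have "holo_eq E \<dots> (lsub t (kill star t))"
    using assms(1) w by (intro lie_eq.add_zero) simp
  finally show ?thesis using assms(1) by (rule star_subalg_holo_eq[OF _ star_subalg_diff_kill])
qed

text \<open>For \<open>y = {s, t}\<close> off \<open>v\<close> and \<open>w = {v, s}\<close>, the triangle \<open>{v, s, t}\<close> (if present) gives
  \<open>[y, w] = [w, {v, t}]\<close>; without it, \<open>y\<close> and \<open>w\<close> commute.\<close>
definition star_action :: "'v set \<Rightarrow> 'v set \<Rightarrow> ('v set, 'k::field) lterm" where
  "star_action y w = (if y \<in> E \<and> v \<notin> y \<and> w \<in> star \<and> w \<inter> y \<noteq> {} \<and> insert v (y - w) \<in> E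
     then LBr (Gen w) (Gen (insert v (y - w))) else LZero)"

definition edge_der :: "'v set \<Rightarrow> ('v set, 'k::field) lterm \<Rightarrow> ('v set, 'k) lterm" where
  "edge_der e = (if v \<in> e then (\<lambda>u. LZero) else der_ext (star_action e))"

definition edge_vec :: "'v set \<Rightarrow> ('v set, 'k::field) lterm" where
  "edge_vec e = (if v \<in> e then Gen e else LZero)"

lemma lwf_star_action: "lwf star (star_action y w)"
  unfolding star_action_def star_def by auto

lemma is_der_star_action: "is_der star (der_ext (star_action y))"
  using lwf_star_action by (intro is_der_der_ext) blast

lemma sdp_rep_edges: "sdp_rep E star (edge_der :: _ \<Rightarrow> ('v set, 'k::field) lterm \<Rightarrow> _) edge_vec"
  by unfold_locales
    (auto simp: edge_der_def edge_vec_def is_der_star_action is_der_zero star_def[symmetric],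
      simp add: star_def)

lemma star_action_hit:
  assumes "y = {s, t}" "y \<in> E" "{v, s} \<in> E" "v \<noteq> s" "v \<noteq> t" "s \<noteq> t"
  shows "star_action y {v, s} = (if {v, t} \<in> E then LBr (Gen {v, s}) (Gen {v, t}) else LZero)"
proof -
  have "y - {v, s} = {t}" "{v, s} \<inter> y \<noteq> {}" "v \<notin> y" "{v, s} \<in> star"
    using assms by (auto simp: star_def)
  then show ?thesis using assms(2) by (simp add: star_action_def)
qed

lemma star_action_miss: "s \<notin> y \<Longrightarrow> v \<notin> y \<Longrightarrow> star_action y {v, s} = LZero"
  unfolding star_action_def by auto

lemma star_action_nonzeroE:
  assumes "star_action y w \<noteq> LZero"
  obtains s t where "w = {v, s}" "y = {s, t}" "s \<noteq> v" "t \<noteq> v" "s \<noteq> t"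
    "{v, s} \<in> E" "{v, t} \<in> E" "y \<in> E" "star_action y w = LBr (Gen {v, s}) (Gen {v, t})"
proof -
  have c: "y \<in> E" "v \<notin> y" "w \<in> star" "w \<inter> y \<noteq> {}" "insert v (y - w) \<in> E"
    and f: "star_action y w = LBr (Gen w) (Gen (insert v (y - w)))"
    using assms unfolding star_action_def by (simp_all split: if_splits)
  obtain s where s: "s \<noteq> v" "w = {v, s}" "{v, s} \<in> E" using c(3) by (rule star_edgeE)
  have "s \<in> y" using c(2,4) s(2) by auto
  with c(1) obtain t where t: "t \<noteq> s" "y = {s, t}" by (rule edge_other_end)
  have "t \<noteq> v" using c(2) t(2) by auto
  then have "insert v (y - w) = {v, t}" using s t by auto
  then show thesis using s t c f \<open>t \<noteq> v\<close> by (intro that[of s t]) simp_all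
qed

lemma star_action_triangle: "star_action y x \<noteq> LZero \<Longrightarrow> \<exists>T. triangle E T \<and> x \<in> T \<and> y \<in> T"
proof -
  assume "star_action y x \<noteq> LZero"
  then obtain s t where h: "x = {v, s}" "y = {s, t}" "s \<noteq> v" "t \<noteq> v" "s \<noteq> t" "{v, s} \<in> E"
    "{v, t} \<in> E" "y \<in> E"
    by (rule star_action_nonzeroE)
  have "triangle E {{v, s}, {s, t}, {v, t}}" using h by (intro triangle_intro) auto
  then show ?thesis using h(1,2) by blast
qed

lemma der_ext_star_action_commuting:
  assumes xy: "x \<noteq> y" and no_triangle: "\<not> (\<exists>T. triangle E T \<and> x \<in> T \<and> y \<in> T)"
  shows "lie_eq star {} (der_ext (star_action x) (star_action y w) :: ('v set, 'k::field) lterm) LZero"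
proof (cases "star_action y w = (LZero :: ('v set, 'k) lterm)")
  case True
  then show ?thesis by (simp add: lie_eq.refl)
next
  case False
  then obtain s t where h: "w = {v, s}" "y = {s, t}" "s \<noteq> v" "t \<noteq> v" "s \<noteq> t" "{v, s} \<in> E"
    "{v, t} \<in> E" "y \<in> E" "star_action y w = (LBr (Gen {v, s}) (Gen {v, t}) :: ('v set, 'k) lterm)"
    by (rule star_action_nonzeroE)
  \<comment> \<open>a nonzero value would close a triangle through \<open>x\<close> and \<open>y\<close>, as the link is complete\<close>
  have vanish: "star_action x {v, a} = (LZero :: ('v set, 'k) lterm)"
    if a: "a \<in> y" for a
  proof (rule ccontr)
    assume "star_action x {v, a} \<noteq> (LZero :: ('v set, 'k) lterm)"
    then obtain a' r where g: "{v, a} = {v, a'}" "x = {a', r}" "a' \<noteq> v" "r \<noteq> v" "a' \<noteq> r"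
      "{v, r} \<in> E" "x \<in> E"
      by (rule star_action_nonzeroE)
    have "a' = a" using g(1,3) by (auto simp: doubleton_eq_iff)
    obtain b where b: "b \<noteq> a" "y = {a, b}" using h(8) a(1) by (rule edge_other_end)
    have "{v, b} \<in> E" using b h(2,6,7) by (auto simp: doubleton_eq_iff)
    have "b \<noteq> r" using xy g(2) b(2) \<open>a' = a\<close> by auto
    then have "{b, r} \<in> E" using link_clique[OF \<open>{v, b} \<in> E\<close> g(6)] by simp
    moreover have "{a, r} \<in> E" "y \<in> E" using g(2,7) h(8) \<open>a' = a\<close> by simp_all
    ultimately have "triangle E {{a, b}, {b, r}, {a, r}}"
      using b g(5) \<open>a' = a\<close> \<open>b \<noteq> r\<close> by (intro triangle_intro) auto
    then show False using no_triangle g(2) b(2) \<open>a' = a\<close> by blast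
  qed
  have "star_action x {v, s} = (LZero :: ('v set, 'k) lterm)"
    "star_action x {v, t} = (LZero :: ('v set, 'k) lterm)"
    using vanish h(2) by auto
  moreover have "{v, s} \<in> star" "{v, t} \<in> star" using h unfolding star_def by auto
  ultimately show ?thesis using h(9) by simp (intro lie_eq_by_lcoeffs, auto)
qed

lemma op_eq_der_comm_star_action_commuting:
  assumes xy: "x \<noteq> y" and no_triangle: "\<not> (\<exists>T. triangle E T \<and> x \<in> T \<and> y \<in> T)"
  shows "op_eq star (der_comm (der_ext (star_action x)) (der_ext (star_action y)))
    (\<lambda>u. LZero :: ('v set, 'k::field) lterm)"
proof (rule op_eq_if_eq_on_gens[OF is_der_comm[OF is_der_star_action is_der_star_action] is_der_zero],
    intro ballI)
  fix w assume "w \<in> star"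
  have "lie_eq star {} (lsub (der_ext (star_action x) (star_action y w))
      (der_ext (star_action y) (star_action x w))) (lsub (LZero :: ('v set, 'k) lterm) LZero)"
    using der_ext_star_action_commuting[OF xy no_triangle]
      der_ext_star_action_commuting[OF xy[symmetric]] no_triangle
    by (intro lie_eq_cong_intros) blast+
  also have "lie_eq star {} \<dots> LZero" by (intro lie_eq_by_lcoeffs) auto
  finally show "lie_eq star {} (der_comm (der_ext (star_action x)) (der_ext (star_action y)) (Gen w))
      (LZero :: ('v set, 'k) lterm)" by simp
qed

lemma rep_eq_commuting_edges:
  assumes x: "x \<in> E" and y: "y \<in> E" and xy: "x \<noteq> y"
    and no_triangle: "\<not> (\<exists>T. triangle E T \<and> x \<in> T \<and> y \<in> T)"
  shows "rep_eq star edge_der edge_vec (LBr (Gen x) (Gen y)) (LZero :: ('v set, 'k::field) lterm)"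
proof -
  consider "v \<in> x" "v \<in> y" | "v \<in> x" "v \<notin> y" | "v \<notin> x" "v \<in> y" | "v \<notin> x" "v \<notin> y" by blast
  then show ?thesis
  proof cases
    case 1
    obtain a where a: "a \<noteq> v" "x = {v, a}" using x 1(1) by (rule edge_other_end)
    obtain b where b: "b \<noteq> v" "y = {v, b}" using y 1(2) by (rule edge_other_end)
    have "a \<noteq> b" using xy a b by auto
    then have "{a, b} \<in> E" using link_clique x y a b by blast
    then have "triangle E {{v, a}, {a, b}, {v, b}}" using a b x y \<open>a \<noteq> b\<close> by (intro triangle_intro) auto
    then show ?thesis using no_triangle a b by blast
  next
    case 2
    have "star_action y x = (LZero :: ('v set, 'k) lterm)"
      using star_action_triangle no_triangle by blast
    then show ?thesis using 2 x unfolding rep_eq_def op_eq_def edge_der_def edge_vec_def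
      by (simp add: star_def) (intro conjI allI impI lie_eq_by_lcoeffs, auto)
  next
    case 3
    have "star_action x y = (LZero :: ('v set, 'k) lterm)"
      using star_action_triangle no_triangle by blast
    then show ?thesis using 3 y unfolding rep_eq_def op_eq_def edge_der_def edge_vec_def
      by (simp add: star_def) (intro conjI allI impI lie_eq_by_lcoeffs, auto)
  next
    case 4
    have "op_eq star (der_comm (der_ext (star_action x)) (der_ext (star_action y)))
       (\<lambda>u. LZero :: ('v set, 'k) lterm)"
      using xy no_triangle by (rule op_eq_der_comm_star_action_commuting)
    then show ?thesis using 4 unfolding rep_eq_def edge_der_def edge_vec_def
      by simp (intro lie_eq_by_lcoeffs, auto)
  qed
qed

lemma der_comm_star_action_at_vertex:
  assumes xyz: "x = {s, t}" "y = {s, r}" "z = {t, r}"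
    and st: "s \<noteq> t" "t \<noteq> r" "s \<noteq> r" and off_v: "v \<noteq> s" "v \<noteq> t" "v \<noteq> r"
    and edges: "x \<in> E" "y \<in> E" "z \<in> E" "{v, s} \<in> E"
  defines "Dx \<equiv> der_ext (star_action x)" and "Dy \<equiv> der_ext (star_action y)"
    and "Dz \<equiv> der_ext (star_action z)"
  shows "lie_eq star {} (der_comm Dx Dz (Gen {v, s}))
      (der_comm Dz Dy (Gen {v, s}) :: ('v set, 'k::field) lterm)"
    and "lie_eq star {} (der_comm Dz Dy (Gen {v, s}))
      (der_comm Dy Dx (Gen {v, s}) :: ('v set, 'k) lterm)"
proof -
  let ?es = "Gen {v, s} :: ('v set, 'k) lterm" and ?et = "Gen {v, t} :: ('v set, 'k) lterm"
    and ?er = "Gen {v, r} :: ('v set, 'k) lterm"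
  note xyz[simp]
  have action_values:
    "star_action {s, t} {v, s} = (if {v, t} \<in> E then LBr ?es ?et else LZero)"
    "star_action {s, r} {v, s} = (if {v, r} \<in> E then LBr ?es ?er else LZero)"
    "{v, t} \<in> E \<Longrightarrow> star_action {t, r} {v, t} = (if {v, r} \<in> E then LBr ?et ?er else LZero)"
    "{v, r} \<in> E \<Longrightarrow> star_action {r, t} {v, r} = (if {v, t} \<in> E then LBr ?er ?et else LZero)"
    using assms by (intro star_action_hit; simp add: insert_commute)+
  have action_zero:
    "star_action {t, r} {v, s} = (LZero :: ('v set, 'k) lterm)"
    "star_action {s, t} {v, r} = (LZero :: ('v set, 'k) lterm)"
    "star_action {s, r} {v, t} = (LZero :: ('v set, 'k) lterm)"
    using assms by (intro star_action_miss; simp)+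
  have star: "{v, s} \<in> star" "{v, t} \<in> E \<Longrightarrow> {v, t} \<in> star" "{v, r} \<in> E \<Longrightarrow> {v, r} \<in> star"
    using edges unfolding star_def by auto
  show "lie_eq star {} (der_comm Dx Dz ?es) (der_comm Dz Dy ?es)"
  proof (cases "{v, t} \<in> E \<and> {v, r} \<in> E")
    case True
    \<comment> \<open>the two sides are \<open>-[es, [et, er]]\<close> and \<open>[es, [er, et]]\<close>\<close>
    have zero: "lie_eq star {} (LSmul (-1) (LBr ?es (br_sym ?et ?er))) LZero"
      using True star by (intro lie_eq_zero_intros) simp_all
    show ?thesis
      unfolding Dx_def Dy_def Dz_def using True action_values action_zero star insert_commute[of t r]
      by simp (rule lie_eq_by_lcoeffs_mod[OF _ _ zero], auto)
  next
    case False
    then show ?thesis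
      unfolding Dx_def Dy_def Dz_def using action_values action_zero star insert_commute[of t r]
      by (cases "{v, t} \<in> E"; cases "{v, r} \<in> E"; simp; intro lie_eq_by_lcoeffs; auto)
  qed
  show "lie_eq star {} (der_comm Dz Dy ?es) (der_comm Dy Dx ?es)"
  proof (cases "{v, t} \<in> E \<and> {v, r} \<in> E")
    case True
    \<comment> \<open>the two sides are \<open>[es, [er, et]]\<close> and \<open>[[es, er], et] - [[es, et], er]\<close>\<close>
    have zero: "lie_eq star {} (LAdd (jacobiator ?es ?er ?et)
        (LAdd (LSmul (-1) (br_sym (LBr ?es ?er) ?et))
          (LAdd (br_sym (LBr ?es ?et) ?er) (LSmul (-1) (LBr ?er (br_sym ?es ?et)))))) LZero"
      using True star by (intro lie_eq_zero_intros) simp_all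
    show ?thesis
      unfolding Dx_def Dy_def Dz_def using True action_values action_zero star insert_commute[of t r]
      by simp (rule lie_eq_by_lcoeffs_mod[OF _ _ zero], auto simp: algebra_simps)
  next
    case False
    then show ?thesis
      unfolding Dx_def Dy_def Dz_def using action_values action_zero star insert_commute[of t r]
      by (cases "{v, t} \<in> E"; cases "{v, r} \<in> E"; simp; intro lie_eq_by_lcoeffs; auto)
  qed
qed

lemma rep_eq_triangle_through_v:
  assumes pqr: "p \<noteq> q" "q \<noteq> r" "p \<noteq> r" and v: "v \<in> {p, q, r}"
    and edges: "{p, q} \<in> E" "{q, r} \<in> E" "{p, r} \<in> E"
  shows "rep_eq star edge_der edge_vec
    (LBr (Gen {p, q}) (Gen {q, r})) (LBr (Gen {q, r}) (Gen {p, r}) :: ('v set, 'k::field) lterm)"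
proof -
  let ?a = "{p, q}" and ?b = "{q, r}" and ?c = "{p, r}"
  have star: "?a \<in> star \<longleftrightarrow> v \<in> ?a" "?b \<in> star \<longleftrightarrow> v \<in> ?b" "?c \<in> star \<longleftrightarrow> v \<in> ?c"
    using edges unfolding star_def by auto
  consider "v = q" | "v = p" | "v = r" using v by blast
  then show ?thesis
  proof cases
    case 1
    have "star_action ?c ?b = (LBr (Gen ?b) (Gen ?a) :: ('v set, 'k) lterm)"
      using star_action_hit[of ?c r p] edges pqr 1 by (simp add: insert_commute)
    then show ?thesis
      using 1 pqr star unfolding rep_eq_def op_eq_def edge_der_def edge_vec_def
      by (simp add: lie_eq.refl)
        (rule lie_eq_by_lcoeffs_mod[where z = "br_sym (Gen ?a) (Gen ?b)"], auto intro: lie_eq_anticomm)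
  next
    case 2
    have "star_action ?b ?a = (LBr (Gen ?a) (Gen ?c) :: ('v set, 'k) lterm)"
      "star_action ?b ?c = (LBr (Gen ?c) (Gen ?a) :: ('v set, 'k) lterm)"
      using star_action_hit[of ?b q r] star_action_hit[of ?b r q] edges pqr 2
      by (simp_all add: insert_commute)
    then show ?thesis
      using 2 pqr star unfolding rep_eq_def op_eq_def edge_der_def edge_vec_def
      by (simp add: lie_eq.refl)
        (rule lie_eq_by_lcoeffs_mod[where z = "LSmul (-1) (br_sym (Gen ?a) (Gen ?c))"],
          auto intro: lie_eq_zero_smulI[OF lie_eq_anticomm])
  next
    case 3
    have "star_action ?a ?b = (LBr (Gen ?b) (Gen ?c) :: ('v set, 'k) lterm)"
      using star_action_hit[of ?a q p] edges pqr 3 by (simp add: insert_commute)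
    then show ?thesis
      using 3 pqr star unfolding rep_eq_def op_eq_def edge_der_def edge_vec_def
      by (simp add: lie_eq.refl) (intro lie_eq_by_lcoeffs, auto)
  qed
qed

lemma rep_eq_triangle_off_v:
  assumes pqr: "p \<noteq> q" "q \<noteq> r" "p \<noteq> r" and v: "v \<notin> {p, q, r}"
    and edges: "{p, q} \<in> E" "{q, r} \<in> E" "{p, r} \<in> E"
  shows "rep_eq star edge_der edge_vec
    (LBr (Gen {p, q}) (Gen {q, r})) (LBr (Gen {q, r}) (Gen {p, r}) :: ('v set, 'k::field) lterm)"
proof -
  let ?Da = "der_ext (star_action {p, q}) :: ('v set, 'k) lterm \<Rightarrow> _"
    and ?Db = "der_ext (star_action {q, r}) :: ('v set, 'k) lterm \<Rightarrow> _"
    and ?Dc = "der_ext (star_action {p, r}) :: ('v set, 'k) lterm \<Rightarrow> _"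
  have "op_eq star (der_comm ?Da ?Db) (der_comm ?Db ?Dc)"
  proof (rule op_eq_if_eq_on_gens[OF is_der_comm is_der_comm], (rule is_der_star_action)+, intro ballI)
    fix w assume "w \<in> star"
    then obtain s where s: "s \<noteq> v" "w = {v, s}" "{v, s} \<in> E" by (rule star_edgeE)
    note vertex = der_comm_star_action_at_vertex[where 'k = 'k]
    consider "s = p" | "s = q" | "s = r" | "s \<notin> {p, q, r}" by blast
    then show "lie_eq star {} (der_comm ?Da ?Db (Gen w)) (der_comm ?Db ?Dc (Gen w))"
    proof cases
      case 1
      show ?thesis using vertex(1)[of "{p, q}" p q "{p, r}" r "{q, r}"] pqr v edges s(2,3) 1 by simp
    next
      case 2
      show ?thesis
        using vertex[of "{q, r}" q r "{q, p}" p "{r, p}"] pqr v edges s(2,3) 2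
        by (simp add: insert_commute) (meson lie_eq.sym lie_eq.trans)
    next
      case 3
      show ?thesis
        using vertex(2)[of "{r, p}" r p "{r, q}" q "{p, q}"] pqr v edges s(2,3) 3
        by (simp add: insert_commute)
    next
      case 4
      then have "star_action e w = (LZero :: ('v set, 'k) lterm)"
        if "e \<in> {{p, q}, {q, r}, {p, r}}" for e
        using that v s(2) by (auto intro: star_action_miss)
      then show ?thesis by (simp add: lie_eq.refl)
    qed
  qed
  then show ?thesis
    using v unfolding rep_eq_def edge_der_def edge_vec_def by simp (intro lie_eq_by_lcoeffs, auto)
qed

lemma rep_eq_holo_rels:
  assumes "(s, t) \<in> holo_rels E"
  shows "rep_eq star edge_der edge_vec s (t :: ('v set, 'k::field) lterm)"
  using assms
proof (cases rule: holo_relsE)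
  case (commute x y)
  then show ?thesis using rep_eq_commuting_edges by simp
next
  case (triangle a b c)
  then obtain p q r where pqr: "p \<noteq> q" "q \<noteq> r" "p \<noteq> r" "a = {p, q}" "b = {q, r}" "c = {p, r}"
    by (elim triangle_labelling)
  have "{p, q} \<in> E" "{q, r} \<in> E" "{p, r} \<in> E" using triangle(6) pqr unfolding triangle_def by auto
  then show ?thesis
    using triangle(1,2) pqr rep_eq_triangle_through_v rep_eq_triangle_off_v by blast
qed

lemma rep_star_terms:
  fixes s :: "('v set, 'k::field) lterm"
  assumes "lwf star s"
  shows "op_eq star (rep_der edge_der s) (\<lambda>u. LZero) \<and> lie_eq star {} (rep_vec edge_der edge_vec s) s"
  using assms
proof (induction s)
  case (Gen e)
  then have "v \<in> e" unfolding star_def by auto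
  then show ?case using Gen unfolding op_eq_def by (simp add: edge_der_def edge_vec_def lie_eq.refl)
next
  case LZero
  then show ?case unfolding op_eq_def by (simp add: lie_eq.refl)
next
  case (LAdd s t)
  then show ?case unfolding op_eq_def
    by (auto intro: lie_eq_zero_addI lie_eq.cong_add)
next
  case (LSmul c s)
  then show ?case unfolding op_eq_def
    by (auto intro: lie_eq_zero_smulI lie_eq.cong_smul)
next
  case (LBr s t)
  then have IH:
    "op_eq star (rep_der edge_der s) (\<lambda>u. LZero)" "lie_eq star {} (rep_vec edge_der edge_vec s) s"
    "op_eq star (rep_der edge_der t) (\<lambda>u. LZero)" "lie_eq star {} (rep_vec edge_der edge_vec t) t"
    and w: "lwf star s" "lwf star t" by auto
  have lwf_rep: "lwf star (rep_der edge_der s u)" "lwf star (rep_der edge_der t u)"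
    if "lwf star u" for u :: "('v set, 'k) lterm"
    using w[THEN lwf_star_E] that by (simp_all add: sdp_rep.lwf_rep_der[OF sdp_rep_edges])
  have lwf_vec: "lwf star (rep_vec edge_der edge_vec s)" "lwf star (rep_vec edge_der edge_vec t)"
    using w[THEN lwf_star_E] by (simp_all add: sdp_rep.lwf_rep_vec[OF sdp_rep_edges])
  have zero: "lie_eq star {} (rep_der edge_der s u) LZero" "lie_eq star {} (rep_der edge_der t u) LZero"
    if "lwf star u" for u
    using IH(1,3) that unfolding op_eq_def by auto
  have "op_eq star (rep_der edge_der (LBr s t)) (\<lambda>u. LZero)"
    unfolding op_eq_def using zero lwf_rep by (auto intro!: lie_eq_zero_addI lie_eq_zero_smulI)
  moreover have "lie_eq star {} (rep_vec edge_der edge_vec (LBr s t)) (LBr s t)"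
  proof -
    have "lie_eq star {} (rep_vec edge_der edge_vec (LBr s t)) (LAdd LZero (LBr s t))"
      using zero lwf_vec IH(2,4)
      by (auto intro!: lie_eq.cong_add lie_eq.cong_br lie_eq_zero_addI lie_eq_zero_smulI)
    also have "lie_eq star {} \<dots> (LBr s t)" using w by (intro lie_eq_add_zero_left) simp
    finally show ?thesis .
  qed
  ultimately show ?case by blast
qed

theorem holo_eq_star_iff_free:
  assumes "lwf star s" "lwf star s'"
  shows "holo_eq E s s' \<longleftrightarrow> lie_eq star {} s (s' :: ('v set, 'k::field) lterm)"
proof
  assume "holo_eq E s s'"
  then have "rep_eq star edge_der edge_vec s s'"
    using sdp_rep.rep_eq_if_lie_eq[OF sdp_rep_edges] rep_eq_holo_rels by blast
  then have "lie_eq star {} (rep_vec edge_der edge_vec s) (rep_vec edge_der edge_vec s')"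
    unfolding rep_eq_def by blast
  then show "lie_eq star {} s s'"
    using rep_star_terms[OF assms(1)] rep_star_terms[OF assms(2)]
    by (meson lie_eq.sym lie_eq.trans)
next
  assume "lie_eq star {} s s'"
  then show "holo_eq E s s'" by (rule lie_eq_mono) (use star_subset in auto)
qed

end

theorem mainTheorem4:
  fixes Vs :: "'v set" and E :: "'v set set" and v :: 'v
  assumes graph: "simple_graph Vs E"
    and vertex: "v \<in> Vs"
    and K_complete: "\<forall>a b. {a, v} \<in> E \<longrightarrow> {b, v} \<in> E \<longrightarrow> a \<noteq> b \<longrightarrow> {a, b} \<in> E"
  defines "V \<equiv> {e \<in> E. v \<in> e}"
    and "E2 \<equiv> E - {e \<in> E. v \<in> e}"
  shows
    \<comment> \<open>the generators in V (and hence the Lie subalgebra they generate) lie in ker \<pi>\<close>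
    "(\<forall>s::('v set, 'k::field) lterm. lwf V s \<longrightarrow> holo_eq E2 (kill V s) LZero)
     \<comment> \<open>ker \<pi> is generated, as a Lie algebra, by the images of the edges in V\<close>
   \<and> (\<forall>t::('v set, 'k) lterm. lwf E t \<and> holo_eq E2 (kill V t) LZero \<longrightarrow>
        (\<exists>s. lwf V s \<and> holo_eq E s t))
     \<comment> \<open>the canonical map from the free Lie algebra on V into L_G is injective\<close>
   \<and> (\<forall>s s'::('v set, 'k) lterm. lwf V s \<and> lwf V s' \<longrightarrow>
        (holo_eq E s s' \<longleftrightarrow> lie_eq V {} s s'))"
proof -
  have link: "clique_link Vs E v"
    using graph K_complete by unfold_locales (simp_all add: insert_commute)
  have V: "V = clique_link.star E v" and E2: "E2 = clique_link.E2 E v"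
    unfolding V_def E2_def clique_link.star_def[OF link] clique_link.E2_def[OF link] by simp_all
  have "clique_link.star_subalg E v t \<longleftrightarrow> (\<exists>s. lwf V s \<and> holo_eq E s t)" for t :: "('v set, 'k) lterm"
    unfolding V clique_link.star_subalg_def[OF link] by (meson lie_eq.sym)
  then show ?thesis
    unfolding V E2
    using lie_eq_kill_zero clique_link.star_subalg_if_kill_zero[OF link]
      clique_link.holo_eq_star_iff_free[OF link]
    by blast
qed

end
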